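(* (1) For each triple of integers $k,q,h>0$ there exists a homogeneous polynomial $P_{k,q,h}(Z_2,Z_3,\ldots)$ of degree $k$ (where $Z_j$ has degree $j$), independent of $N$, such that for every integer $N>0$ \[ \sum_{({\boldsymbol{k}};l)\in \tilde{I}_0(k,q,h)}\tilde{\zeta}^{(N)}({\boldsymbol{k}};l)=P_{k,q,h}(\zeta^{(N)}(2),\zeta^{(N)}(3),\ldots). \] (2) For all integers $N,k,q,h>0$, \[ \sum_{({\boldsymbol{k}};l)\in \tilde{I}_0(k,q,h)}\tilde{\zeta}^{(N)}({\boldsymbol{k}};l)=\sum_{({\boldsymbol{k}};l)\in \tilde{I}_0(k,k-q,h)}\tilde{\zeta}^{(N)}({\boldsymbol{k}};l). \]
   Context: $\zeta^{(N)}(k)=\sum_{n=1}^{N-1}n^{-k}$. For $(k_1,\ldots,k_r)\in\mathbb{Z}_{>0}^r$ and integer $l\ge0$, \[ \tilde{\zeta}^{(N)}(k_1,\ldots,k_r;l)=\sum_{0<m_1<\cdots<m_r<N}\frac{1}{m_1^{k_1}\cdots m_r^{k_r}}\sum_{0<n_1\le\cdots\le n_l\le m_r}\frac{1}{(N-n_1)\cdots(N-n_l)} \] (the inner sum is $1$ when $l=0$), and $\tilde{I}_0(k,q,h)$ is the set of $(k_1,\ldots,k_r;l)\in\mathbb{Z}_{>0}^r\times\mathbb{Z}_{\ge0}$ with $r>0$, $k_r>1$, $k_1+\cdots+k_r+l=k$, $r+l=q$, $\#\{i\mid k_i>1\}=h$ (empty sums are $0$). *)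

theory Defs
  imports Complex_Main
begin

definition zetaN :: "nat \<Rightarrow> nat \<Rightarrow> real" where
  "zetaN N k = (\<Sum>n\<in>{1..<N}. 1 / real n ^ k)"

definition incr_tuples :: "nat \<Rightarrow> nat \<Rightarrow> nat list set" where
  "incr_tuples N r = {ms. length ms = r \<and> sorted_wrt (<) ms \<and> set ms \<subseteq> {1..<N}}"

definition weak_tuples :: "nat \<Rightarrow> nat \<Rightarrow> nat list set" where
  "weak_tuples M l = {ns. length ns = l \<and> sorted ns \<and> set ns \<subseteq> {1..M}}"

definition tzetaN :: "nat \<Rightarrow> nat list \<Rightarrow> nat \<Rightarrow> real" where
  "tzetaN N ks l =
     (\<Sum>ms\<in>incr_tuples N (length ks).
        (\<Prod>i<length ks. 1 / real (ms ! i) ^ (ks ! i)) *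
        (\<Sum>ns\<in>weak_tuples (last ms) l. \<Prod>i<l. 1 / real (N - ns ! i)))"

definition I0 :: "nat \<Rightarrow> nat \<Rightarrow> nat \<Rightarrow> (nat list \<times> nat) set" where
  "I0 k q h = {(ks, l). ks \<noteq> [] \<and> (\<forall>x\<in>set ks. x > 0) \<and> last ks > 1 \<and>
                sum_list ks + l = k \<and> length ks + l = q \<and>
                length (filter (\<lambda>x. x > 1) ks) = h}"

definition S0 :: "nat \<Rightarrow> nat \<Rightarrow> nat \<Rightarrow> nat \<Rightarrow> real" where
  "S0 N k q h = (\<Sum>(ks, l)\<in>I0 k q h. tzetaN N ks l)"

definition wmonomials :: "nat \<Rightarrow> (nat \<Rightarrow> nat) set" where
  "wmonomials k = {e. (\<forall>j. e j \<noteq> 0 \<longrightarrow> 2 \<le> j \<and> j \<le> k) \<and> (\<Sum>j\<in>{2..k}. j * e j) = k}"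

definition eval_whpoly :: "nat \<Rightarrow> ((nat \<Rightarrow> nat) \<Rightarrow> rat) \<Rightarrow> (nat \<Rightarrow> real) \<Rightarrow> real" where
  "eval_whpoly k c Z = (\<Sum>e\<in>wmonomials k. of_rat (c e) * (\<Prod>j\<in>{2..k}. Z j ^ e j))"

end

(*
  Splitting each tuple at its largest index m_r = M shows that S0 N k q h is the coefficient
  of x^a y^b z^c, with (a, b, c) = (k - q - h, q - h, h - 1), in the generating series

    gen N = sum_{0<M<N} 1/(M (M - x)) * prod_{n=1}^{M} (N - n)/(N - n - y)
                                      * prod_{0<m<M} (1 + y/m + z/(m (m - x))).

  A terminating Pfaff-Saalschuetz summation gives the product formula

    1 + (z - x y) gen N = prod_{0<n<N} (1 + (z - x y)/((n - x) (n - y))).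

  The product is symmetric in x and y, which is the duality q <-> k - q.  Grading x and y
  by weight 1 and z by weight 2, the logarithmic derivative of the n-th factor is the
  n = 1 one rescaled by 1/n, so the logarithmic derivative of the product has coefficients
  (rational number) * zetaN N w in weight w >= 2.  The resulting recursion expresses every
  coefficient of the product, hence every S0 N k q h, as a weighted-homogeneous polynomial
  with rational coefficients in zetaN N 2, zetaN N 3, ...
*)
theory Submission
  imports Defs "HOL-Computational_Algebra.Formal_Power_Series" "HOL-Computational_Algebra.Fraction_Field"
begin

unbundle fps_syntax

section \<open>Power series in three variables\<close>

type_synonym 'a fps3 = "'a fps fps fps"

definition coeff3 :: "'a fps3 \<Rightarrow> nat \<Rightarrow> nat \<Rightarrow> nat \<Rightarrow> 'a" where
  "coeff3 f a b c = f $ a $ b $ c"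

definition Abs_fps3 :: "(nat \<Rightarrow> nat \<Rightarrow> nat \<Rightarrow> 'a) \<Rightarrow> 'a fps3" where
  "Abs_fps3 g = Abs_fps (\<lambda>a. Abs_fps (\<lambda>b. Abs_fps (\<lambda>c. g a b c)))"

abbreviation const3 :: "'a::zero \<Rightarrow> 'a fps3" where
  "const3 r \<equiv> fps_const (fps_const (fps_const r))"

lemma coeff3_Abs_fps3 [simp]: "coeff3 (Abs_fps3 g) a b c = g a b c"
  by (simp add: coeff3_def Abs_fps3_def)

lemma fps3_ext: "(\<And>a b c. coeff3 f a b c = coeff3 g a b c) \<Longrightarrow> f = g"
  unfolding coeff3_def by (intro fps_ext) auto

lemma coeff3_add [simp]: "coeff3 (f + g) a b c = coeff3 f a b c + coeff3 g a b c"
  and coeff3_diff [simp]: "coeff3 (f' - g') a b c = coeff3 f' a b c - coeff3 g' a b c"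
  and coeff3_0 [simp]: "coeff3 0 a b c = 0"
  and coeff3_const3: "coeff3 (const3 r) a b c = (if a = 0 \<and> b = 0 \<and> c = 0 then r else 0)"
  by (simp_all add: coeff3_def)

lemma coeff3_1: "coeff3 (1 :: 'a::{zero,one} fps3) a b c = (if a = 0 \<and> b = 0 \<and> c = 0 then 1 else 0)"
  by (simp add: coeff3_def)

lemma coeff3_sum: "coeff3 (sum f S) a b c = (\<Sum>s\<in>S. coeff3 (f s) a b c)"
  by (simp add: coeff3_def fps_sum_nth)

lemma coeff3_mult:
  "coeff3 (f * g :: 'a::comm_semiring_1 fps3) a b c =
     (\<Sum>i\<le>a. \<Sum>j\<le>b. \<Sum>k\<le>c. coeff3 f i j k * coeff3 g (a - i) (b - j) (c - k))"
  by (simp add: coeff3_def fps_mult_nth fps_sum_nth atLeast0AtMost)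

lemma coeff3_const3_mult [simp]:
  "coeff3 (const3 r * f :: 'a::comm_semiring_1 fps3) a b c = r * coeff3 f a b c"
  by (simp add: coeff3_def)

lemma coeff3_of_nat: "coeff3 (of_nat n :: 'a::comm_semiring_1 fps3) a b c = (if a = 0 \<and> b = 0 \<and> c = 0 then of_nat n else 0)"
  by (simp add: fps_of_nat[symmetric] coeff3_const3)

lemma coeff3_mult_000: "coeff3 (f * g :: 'a::comm_semiring_1 fps3) 0 0 0 = coeff3 f 0 0 0 * coeff3 g 0 0 0"
  by (simp add: coeff3_mult)

abbreviation X3 :: "'a::{zero,one} fps3" where "X3 \<equiv> fps_X"
abbreviation Y3 :: "'a::{zero,one} fps3" where "Y3 \<equiv> fps_const fps_X"
abbreviation Z3 :: "'a::{zero,one} fps3" where "Z3 \<equiv> fps_const (fps_const fps_X)"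

definition x_series :: "(nat \<Rightarrow> 'a::zero) \<Rightarrow> 'a fps3" where
  "x_series u = Abs_fps (\<lambda>a. fps_const (fps_const (u a)))"

definition y_series :: "(nat \<Rightarrow> 'a::zero) \<Rightarrow> 'a fps3" where
  "y_series u = fps_const (Abs_fps (\<lambda>b. fps_const (u b)))"

lemma coeff3_X3_mult:
  "coeff3 (X3 * f :: 'a::comm_semiring_1 fps3) a b c = (if a = 0 then 0 else coeff3 f (a - 1) b c)"
  by (simp add: coeff3_def fps_X_mult_nth)

lemma coeff3_Y3_mult:
  "coeff3 (Y3 * f :: 'a::comm_semiring_1 fps3) a b c = (if b = 0 then 0 else coeff3 f a (b - 1) c)"
  by (simp add: coeff3_def fps_X_mult_nth)

lemma coeff3_Z3_mult:
  "coeff3 (Z3 * f :: 'a::comm_semiring_1 fps3) a b c = (if c = 0 then 0 else coeff3 f a b (c - 1))"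
  by (simp add: coeff3_def fps_X_mult_nth)

lemma coeff3_x_series_mult:
  "coeff3 (x_series u * f :: 'a::comm_semiring_1 fps3) a b c = (\<Sum>i\<le>a. u i * coeff3 f (a - i) b c)"
  unfolding coeff3_def x_series_def by (subst fps_mult_nth) (simp add: fps_sum_nth atLeast0AtMost)

lemma coeff3_y_series_mult:
  "coeff3 (y_series u * f :: 'a::comm_semiring_1 fps3) a b c = (\<Sum>j\<le>b. u j * coeff3 f a (b - j) c)"
  unfolding coeff3_def y_series_def fps_mult_left_const_nth
  by (subst fps_mult_nth) (simp add: fps_sum_nth atLeast0AtMost)

section \<open>A terminating summation in a field\<close>

text \<open>The rational identity behind the Gosper certificate. The denominators are separate
  variables \<open>a\<close>, \<open>b\<close>, \<open>c\<close> so that \<open>field_simps\<close> can clear them.\<close>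
lemma saal_ratio_identity:
  fixes n m x y z a b c :: "'k::field"
  assumes "n \<noteq> 0" "a \<noteq> 0" "b \<noteq> 0" "c \<noteq> 0"
    and a: "a = n - x" and b: "b = n - y" and c: "c = n - m - y"
  shows "(1 + (z - x * y) / (a * b)) * ((n - m) * b / (n * c))
       = 1 + ((m - x) * (m + y) + z) * (n - m) / (n * a * c) - m * (m - x) / (n * a)"
  using assms(1-4) by (simp add: field_simps) (simp add: a b c algebra_simps)

context
  fixes x y z :: "'k::field"
begin

definition saal_P :: "nat \<Rightarrow> 'k" where
  "saal_P M = (\<Prod>m<M. ((of_nat m - x) * (of_nat m + y) + z) / ((of_nat m + 1) * (of_nat m + 1 - x)))"

definition saal_W :: "nat \<Rightarrow> nat \<Rightarrow> 'k" where
  "saal_W N M = (\<Prod>n\<in>{1..M}. of_nat (N - n) / (of_nat (N - n) - y))"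

definition saal_B :: "nat \<Rightarrow> 'k" where
  "saal_B n = 1 + (z - x * y) / ((of_nat n - x) * (of_nat n - y))"

definition saal_A :: "nat \<Rightarrow> 'k" where
  "saal_A m = 1 + y / of_nat m + z / (of_nat m * (of_nat m - x))"

lemma saal_P_Suc:
  "saal_P (Suc M) = saal_P M * (((of_nat M - x) * (of_nat M + y) + z) / ((of_nat M + 1) * (of_nat M + 1 - x)))"
  by (simp add: saal_P_def)

lemma saal_W_Suc:
  "saal_W N (Suc M) = saal_W N M * (of_nat (N - Suc M) / (of_nat (N - Suc M) - y))"
  by (simp add: saal_W_def prod.cl_ivl_Suc)

text \<open>The sum in \<open>saal_sum\<close> below is a terminating balanced \<open>\<^sub>3F\<^sub>2(1)\<close>, an instance of the
  Pfaff-Saalschuetz identity. It is proved by telescoping in \<open>N\<close>, \<open>saal_G\<close> being the Gosper certificate.\<close>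
definition saal_G :: "nat \<Rightarrow> nat \<Rightarrow> 'k" where
  "saal_G N M = - (of_nat M * (of_nat M - x)) / (of_nat N * (of_nat N - x)) * saal_P M * saal_W (Suc N) M"

context
  assumes of_nat_ne_x: "\<And>m::nat. m \<ge> 1 \<Longrightarrow> of_nat m \<noteq> x"
      and of_nat_ne_y: "\<And>m::nat. m \<ge> 1 \<Longrightarrow> of_nat m \<noteq> y"
      and of_nat_ne_0: "\<And>m::nat. m \<ge> 1 \<Longrightarrow> (of_nat m :: 'k) \<noteq> 0"
begin

lemma saal_W_Suc_left:
  assumes "M \<le> N"
  shows "saal_W (Suc N) M * (of_nat (N - M) * (of_nat N - y)) = saal_W N M * (of_nat N * (of_nat (N - M) - y))"
  using assms
proof (induction M)
  case 0
  then show ?case by (simp add: saal_W_def)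
next
  case (Suc M)
  show ?case
  proof (cases "Suc M = N")
    case True
    then have "N - Suc M = 0" by simp
    then show ?thesis by (simp add: saal_W_Suc[of N M])
  next
    case False
    with Suc.prems have "Suc M < N" by simp
    have ne1: "(of_nat (N - M) :: 'k) - y \<noteq> 0" and ne2: "(of_nat (N - Suc M) :: 'k) - y \<noteq> 0"
      using of_nat_ne_y[of "N - M"] of_nat_ne_y[of "N - Suc M"] \<open>Suc M < N\<close> by auto
    have "saal_W (Suc N) (Suc M) * (of_nat (N - Suc M) * (of_nat N - y))
        = saal_W (Suc N) M * (of_nat (N - M) * (of_nat N - y)) * of_nat (N - Suc M) / (of_nat (N - M) - y)"
      by (simp add: saal_W_Suc)
    also have "\<dots> = saal_W N M * of_nat N * of_nat (N - Suc M)"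
      using Suc ne1 by simp
    also have "\<dots> = saal_W N (Suc M) * (of_nat N * (of_nat (N - Suc M) - y))"
      using ne2 by (simp add: saal_W_Suc)
    finally show ?thesis .
  qed
qed

lemma saal_G_telescoping_step:
  assumes "M < N"
  shows "saal_P M * saal_W (Suc N) M - saal_B N * (saal_P M * saal_W N M) = saal_G N (Suc M) - saal_G N M"
proof -
  define T where "T = saal_P M * saal_W (Suc N) M"
  define R where "R = (of_nat N - of_nat M) * (of_nat N - y) / (of_nat N * (of_nat N - of_nat M - y))"
  define U where "U = ((of_nat M - x) * (of_nat M + y) + z) * (of_nat N - of_nat M)
      / (of_nat N * (of_nat N - x) * (of_nat N - of_nat M - y))"
  define V where "V = of_nat M * (of_nat M - x) / (of_nat N * (of_nat N - x))"
  have N0: "(of_nat N :: 'k) \<noteq> 0" and Nx: "of_nat N - x \<noteq> 0" and Ny: "of_nat N - y \<noteq> 0"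
    using assms of_nat_ne_0 of_nat_ne_x of_nat_ne_y by auto
  have NM: "(of_nat (N - M) :: 'k) = of_nat N - of_nat M"
    using assms by (simp add: of_nat_diff)
  have NMy: "(of_nat N :: 'k) - of_nat M - y \<noteq> 0"
    using of_nat_ne_y[of "N - M"] assms NM by auto
  have M1x: "(of_nat M :: 'k) + 1 - x \<noteq> 0" and M1: "(of_nat M :: 'k) + 1 \<noteq> 0"
    using of_nat_ne_x[of "Suc M"] of_nat_ne_0[of "Suc M"] by (auto simp: add.commute)
  have "saal_W N M * (of_nat N * (of_nat N - of_nat M - y))
      = saal_W (Suc N) M * ((of_nat N - of_nat M) * (of_nat N - y))"
    using saal_W_Suc_left[of M N] assms by (simp add: NM)
  then have W: "saal_P M * saal_W N M = T * R"
    using N0 NMy by (simp add: T_def R_def eq_divide_eq)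
  have "Suc N - Suc M = N - M" by simp
  then have G1: "saal_G N (Suc M) = - T * U"
    using M1x M1 by (simp add: saal_G_def T_def U_def saal_P_Suc saal_W_Suc NM add.commute)
  have G0: "saal_G N M = - V * T"
    by (simp add: saal_G_def T_def V_def)
  have BR: "saal_B N * R = 1 + U - V"
    unfolding saal_B_def R_def U_def V_def using N0 Nx Ny NMy
    by (rule saal_ratio_identity) simp_all
  have "T - saal_B N * (saal_P M * saal_W N M) = T - T * (saal_B N * R)"
    unfolding W by (simp add: ac_simps)
  also have "\<dots> = - T * U - - V * T"
    unfolding BR by (simp add: algebra_simps)
  finally show ?thesis by (simp add: T_def G1 G0)
qed

lemma saal_sum_Suc:
  assumes "N \<ge> 1"
  shows "(\<Sum>M<Suc N. saal_P M * saal_W (Suc N) M) = saal_B N * (\<Sum>M<N. saal_P M * saal_W N M)"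
proof -
  have "(\<Sum>M<N. saal_P M * saal_W (Suc N) M)
      = (\<Sum>M<N. saal_B N * (saal_P M * saal_W N M) + (saal_G N (Suc M) - saal_G N M))"
    using saal_G_telescoping_step by (intro sum.cong) (auto simp: algebra_simps)
  also have "\<dots> = saal_B N * (\<Sum>M<N. saal_P M * saal_W N M) + (saal_G N N - saal_G N 0)"
    by (simp add: sum.distrib sum_distrib_left sum_lessThan_telescope)
  also have "saal_G N N = - (saal_P N * saal_W (Suc N) N)"
    using assms of_nat_ne_0[of N] of_nat_ne_x[of N] by (simp add: saal_G_def)
  also have "saal_G N 0 = 0"
    by (simp add: saal_G_def)
  finally show ?thesis by simp
qed

lemma saal_sum:
  assumes "N \<ge> 1"
  shows "(\<Sum>M<N. saal_P M * saal_W N M) = (\<Prod>n\<in>{1..<N}. saal_B n)"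
  using assms
proof (induction N rule: dec_induct)
  case base
  then show ?case by (simp add: saal_P_def saal_W_def)
next
  case (step n)
  have "(\<Sum>M<Suc n. saal_P M * saal_W (Suc n) M) = saal_B n * (\<Sum>M<n. saal_P M * saal_W n M)"
    using step.hyps by (intro saal_sum_Suc) simp
  also have "\<dots> = (\<Prod>k\<in>{1..<Suc n}. saal_B k)"
    using step.hyps step.IH by (simp add: prod.atLeastLessThan_Suc mult.commute)
  finally show ?case .
qed

lemma saal_P_eq_prod_A:
  assumes "M \<ge> 1"
  shows "saal_P M = (z - x * y) / (of_nat M * (of_nat M - x)) * (\<Prod>m\<in>{1..<M}. saal_A m)"
  using assms
proof (induction M rule: dec_induct)
  case base
  then show ?case by (simp add: saal_P_def)
next
  case (step M)
  have M0: "(of_nat M :: 'k) \<noteq> 0" and Mx: "of_nat M - x \<noteq> 0"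
    and M1: "(of_nat M :: 'k) + 1 \<noteq> 0" and M1x: "of_nat M + 1 - x \<noteq> 0"
    using step.hyps of_nat_ne_0[of M] of_nat_ne_x[of M] of_nat_ne_0[of "Suc M"] of_nat_ne_x[of "Suc M"]
    by (auto simp: add.commute)
  have "saal_A M = ((of_nat M - x) * (of_nat M + y) + z) / (of_nat M * (of_nat M - x))"
    unfolding saal_A_def using M0 Mx by (simp add: field_simps)
  with step M0 Mx M1 M1x show ?case
    by (simp add: saal_P_Suc prod.atLeastLessThan_Suc add.commute) (simp add: ac_simps)
qed

lemma saal_product_identity:
  "1 + (z - x * y) * (\<Sum>M\<in>{1..<N}. 1 / (of_nat M * (of_nat M - x)) * (\<Prod>m\<in>{1..<M}. saal_A m) * saal_W N M)
     = (\<Prod>n\<in>{1..<N}. saal_B n)"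
proof (cases "N = 0")
  case False
  then have "{..<N} = insert 0 {1..<N}" by auto
  then have "(\<Sum>M<N. saal_P M * saal_W N M) = 1 + (\<Sum>M\<in>{1..<N}. saal_P M * saal_W N M)"
    by (simp add: saal_P_def saal_W_def)
  also have "(\<Sum>M\<in>{1..<N}. saal_P M * saal_W N M)
      = (z - x * y) * (\<Sum>M\<in>{1..<N}. 1 / (of_nat M * (of_nat M - x)) * (\<Prod>m\<in>{1..<M}. saal_A m) * saal_W N M)"
    unfolding sum_distrib_left by (intro sum.cong refl) (simp add: saal_P_eq_prod_A)
  finally show ?thesis using saal_sum[of N] False by simp
qed simp

end

end

section \<open>Decomposing \<open>tzetaN\<close> along the largest index\<close>

definition hsum :: "nat \<Rightarrow> nat \<Rightarrow> nat \<Rightarrow> real" where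
  "hsum N M l = (\<Sum>ns\<in>weak_tuples M l. \<Prod>i<l. 1 / real (N - ns ! i))"

definition mzvN :: "nat \<Rightarrow> nat list \<Rightarrow> real" where
  "mzvN M ks = (\<Sum>ms\<in>incr_tuples M (length ks). \<Prod>i<length ks. 1 / real (ms ! i) ^ (ks ! i))"

definition n_ones :: "nat list \<Rightarrow> nat" where
  "n_ones ks = length (filter (\<lambda>x. x = 1) ks)"

definition n_big :: "nat list \<Rightarrow> nat" where
  "n_big ks = length (filter (\<lambda>x. 1 < x) ks)"

text \<open>\<open>a\<close> is the excess \<open>\<Sum> (k\<^sub>i - 2)\<close> over the entries \<open>k\<^sub>i > 1\<close>, so the weight is \<open>a + b + 2 c\<close>.\<close>
definition comps :: "nat \<Rightarrow> nat \<Rightarrow> nat \<Rightarrow> nat list set" where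
  "comps a b c = {ks. (\<forall>x\<in>set ks. 0 < x) \<and> n_ones ks = b \<and> n_big ks = c \<and> sum_list ks = a + b + 2 * c}"

definition comps_mzvN :: "nat \<Rightarrow> nat \<Rightarrow> nat \<Rightarrow> nat \<Rightarrow> real" where
  "comps_mzvN M a b c = (\<Sum>ks\<in>comps a b c. mzvN M ks)"

lemma finite_weak_tuples: "finite (weak_tuples M l)"
proof -
  have "weak_tuples M l \<subseteq> {xs. set xs \<subseteq> {1..M} \<and> length xs = l}"
    unfolding weak_tuples_def by auto
  then show ?thesis using finite_lists_length_eq[of "{1..M}" l] finite_subset by blast
qed

lemma finite_incr_tuples: "finite (incr_tuples M r)"
proof -
  have "incr_tuples M r \<subseteq> {xs. set xs \<subseteq> {1..<M} \<and> length xs = r}"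
    unfolding incr_tuples_def by auto
  then show ?thesis using finite_lists_length_eq[of "{1..<M}" r] finite_subset by blast
qed

lemma weak_tuples_0 [simp]: "weak_tuples M 0 = {[]}"
  unfolding weak_tuples_def by auto

lemma incr_tuples_0 [simp]: "incr_tuples M 0 = {[]}"
  unfolding incr_tuples_def by auto

lemma length_eq_n_ones_add_n_big: "\<forall>x\<in>set ks. 0 < x \<Longrightarrow> length ks = n_ones ks + n_big ks"
  unfolding n_ones_def n_big_def by (induction ks) auto

lemma n_ones_add_n_big_le_sum_list: "\<forall>x\<in>set ks. 0 < x \<Longrightarrow> n_ones ks + 2 * n_big ks \<le> sum_list ks"
  unfolding n_ones_def n_big_def by (induction ks) auto

lemma n_ones_Nil [simp]: "n_ones [] = 0"
  and n_big_Nil [simp]: "n_big [] = 0"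
  and n_ones_snoc [simp]: "n_ones (ks @ [k]) = n_ones ks + (if k = 1 then 1 else 0)"
  and n_big_snoc [simp]: "n_big (ks @ [k]) = n_big ks + (if 1 < k then 1 else 0)"
  by (simp_all add: n_ones_def n_big_def)

lemma finite_comps: "finite (comps a b c)"
proof -
  have "comps a b c \<subseteq> {xs. set xs \<subseteq> {0..a + b + 2 * c} \<and> length xs = b + c}"
  proof
    fix ks assume ks: "ks \<in> comps a b c"
    then have "length ks = b + c"
      using length_eq_n_ones_add_n_big[of ks] unfolding comps_def by auto
    moreover have "set ks \<subseteq> {0..a + b + 2 * c}"
      using ks member_le_sum_list[of _ ks] unfolding comps_def by fastforce
    ultimately show "ks \<in> {xs. set xs \<subseteq> {0..a + b + 2 * c} \<and> length xs = b + c}" by simp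
  qed
  then show ?thesis
    using finite_lists_length_eq[of "{0..a + b + 2 * c}" "b + c"] finite_subset by blast
qed

lemma weak_tuples_Suc_Suc:
  "weak_tuples (Suc M) (Suc l) = weak_tuples M (Suc l) \<union> (\<lambda>ns. ns @ [Suc M]) ` weak_tuples (Suc M) l"
proof (intro equalityI subsetI)
  fix ns assume ns: "ns \<in> weak_tuples (Suc M) (Suc l)"
  then have "ns \<noteq> []" unfolding weak_tuples_def by auto
  then obtain xs y where ns_eq: "ns = xs @ [y]" by (metis rev_exhaust)
  have len: "length xs = l" and sorted: "sorted xs" and le: "\<forall>x\<in>set xs. x \<le> y"
    and range: "set xs \<subseteq> {1..Suc M}" "y \<in> {1..Suc M}"
    using ns unfolding ns_eq weak_tuples_def by (auto simp: sorted_append)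
  show "ns \<in> weak_tuples M (Suc l) \<union> (\<lambda>ns. ns @ [Suc M]) ` weak_tuples (Suc M) l"
  proof (cases "y = Suc M")
    case True
    then have "xs \<in> weak_tuples (Suc M) l" using len sorted range unfolding weak_tuples_def by auto
    with ns_eq True show ?thesis by auto
  next
    case False
    with range have "y \<le> M" by auto
    with range le have "set xs \<subseteq> {1..M}" by force
    with ns ns_eq \<open>y \<le> M\<close> range have "ns \<in> weak_tuples M (Suc l)"
      unfolding weak_tuples_def by auto
    then show ?thesis by simp
  qed
next
  fix ns assume "ns \<in> weak_tuples M (Suc l) \<union> (\<lambda>ns. ns @ [Suc M]) ` weak_tuples (Suc M) l"
  then show "ns \<in> weak_tuples (Suc M) (Suc l)"
    unfolding weak_tuples_def by (auto simp: sorted_append subset_iff)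
qed

lemma hsum_0_right [simp]: "hsum N M 0 = 1"
  by (simp add: hsum_def)

lemma hsum_0: "hsum N 0 l = (if l = 0 then 1 else 0)"
proof (cases l)
  case (Suc l')
  then have "weak_tuples 0 l = {}" unfolding weak_tuples_def by (auto simp: length_Suc_conv)
  with Suc show ?thesis by (simp add: hsum_def)
qed simp

lemma hsum_Suc_Suc: "hsum N (Suc M) (Suc l) = hsum N M (Suc l) + hsum N (Suc M) l / real (N - Suc M)"
proof -
  have disj: "weak_tuples M (Suc l) \<inter> (\<lambda>ns. ns @ [Suc M]) ` weak_tuples (Suc M) l = {}"
    unfolding weak_tuples_def by auto
  have inj: "inj_on (\<lambda>ns. ns @ [Suc M]) (weak_tuples (Suc M) l)" by (auto simp: inj_on_def)
  have "hsum N (Suc M) (Suc l) = hsum N M (Suc l) +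
      (\<Sum>ns\<in>weak_tuples (Suc M) l. \<Prod>i<Suc l. 1 / real (N - (ns @ [Suc M]) ! i))"
    unfolding hsum_def weak_tuples_Suc_Suc
    by (simp add: sum.union_disjoint finite_weak_tuples disj sum.reindex[OF inj])
  also have "(\<Sum>ns\<in>weak_tuples (Suc M) l. \<Prod>i<Suc l. 1 / real (N - (ns @ [Suc M]) ! i)) =
      (\<Sum>ns\<in>weak_tuples (Suc M) l. (\<Prod>i<l. 1 / real (N - ns ! i)) / real (N - Suc M))"
  proof (intro sum.cong refl)
    fix ns assume "ns \<in> weak_tuples (Suc M) l"
    then have len: "length ns = l" unfolding weak_tuples_def by auto
    then have "(\<Prod>i<l. 1 / real (N - (ns @ [Suc M]) ! i)) = (\<Prod>i<l. 1 / real (N - ns ! i))"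
      by (intro prod.cong refl) (auto simp: nth_append)
    with len show "(\<Prod>i<Suc l. 1 / real (N - (ns @ [Suc M]) ! i)) = (\<Prod>i<l. 1 / real (N - ns ! i)) / real (N - Suc M)"
      by (simp add: prod.lessThan_Suc nth_append)
  qed
  finally show ?thesis
    by (simp add: hsum_def sum_divide_distrib)
qed

lemma hsum_Suc: "hsum N (Suc M) l = (\<Sum>i\<le>l. hsum N M (l - i) / real (N - Suc M) ^ i)"
proof (induction l)
  case (Suc l)
  have "hsum N (Suc M) (Suc l) = hsum N M (Suc l) + (\<Sum>i\<le>l. hsum N M (l - i) / real (N - Suc M) ^ Suc i)"
    by (simp add: hsum_Suc_Suc Suc sum_divide_distrib power_commutes)
  also have "\<dots> = (\<Sum>i\<le>Suc l. hsum N M (Suc l - i) / real (N - Suc M) ^ i)"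
    by (subst sum.atMost_Suc_shift) (simp add: power_commutes)
  finally show ?case .
qed simp

lemma incr_tuples_Suc_Suc:
  assumes "M \<ge> 1"
  shows "incr_tuples (Suc M) (Suc r) = incr_tuples M (Suc r) \<union> (\<lambda>ms. ms @ [M]) ` incr_tuples M r"
proof (intro equalityI subsetI)
  fix ms assume ms: "ms \<in> incr_tuples (Suc M) (Suc r)"
  then have "ms \<noteq> []" unfolding incr_tuples_def by auto
  then obtain xs y where ms_eq: "ms = xs @ [y]" by (metis rev_exhaust)
  show "ms \<in> incr_tuples M (Suc r) \<union> (\<lambda>ms. ms @ [M]) ` incr_tuples M r"
  proof (cases "y = M")
    case True
    then have "xs \<in> incr_tuples M r"
      using ms ms_eq unfolding incr_tuples_def by (auto simp: sorted_wrt_append)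
    with ms_eq True show ?thesis by auto
  next
    case False
    with ms ms_eq have "y < M" unfolding incr_tuples_def by auto
    have "\<forall>x\<in>set xs. x < y" "set xs \<subseteq> {1..<Suc M}"
      using ms ms_eq unfolding incr_tuples_def by (auto simp: sorted_wrt_append)
    with \<open>y < M\<close> have "set xs \<subseteq> {1..<M}" by force
    with ms ms_eq \<open>y < M\<close> have "ms \<in> incr_tuples M (Suc r)"
      unfolding incr_tuples_def by (auto simp: sorted_wrt_append)
    then show ?thesis by simp
  qed
next
  fix ms assume "ms \<in> incr_tuples M (Suc r) \<union> (\<lambda>ms. ms @ [M]) ` incr_tuples M r"
  with assms show "ms \<in> incr_tuples (Suc M) (Suc r)"
    unfolding incr_tuples_def by (auto simp: sorted_wrt_append subset_iff)
qed

lemma incr_tuples_Suc_eq_UN: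
  "incr_tuples N (Suc r) = (\<Union>M\<in>{1..<N}. (\<lambda>ms. ms @ [M]) ` incr_tuples M r)"
proof (intro equalityI subsetI)
  fix ms assume ms: "ms \<in> incr_tuples N (Suc r)"
  then have "ms \<noteq> []" unfolding incr_tuples_def by auto
  then obtain xs y where ms_eq: "ms = xs @ [y]" by (metis rev_exhaust)
  have "y \<in> {1..<N}" "xs \<in> incr_tuples y r"
    using ms unfolding ms_eq incr_tuples_def by (auto simp: sorted_wrt_append)
  then show "ms \<in> (\<Union>M\<in>{1..<N}. (\<lambda>ms. ms @ [M]) ` incr_tuples M r)" using ms_eq by auto
next
  fix ms assume "ms \<in> (\<Union>M\<in>{1..<N}. (\<lambda>ms. ms @ [M]) ` incr_tuples M r)"
  then show "ms \<in> incr_tuples N (Suc r)"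
    unfolding incr_tuples_def by (auto simp: sorted_wrt_append subset_iff)
qed

lemma prod_power_snoc:
  assumes "length ms = length ks"
  shows "(\<Prod>i<length (ks @ [k]). 1 / real ((ms @ [M]) ! i) ^ ((ks @ [k]) ! i)) =
    (\<Prod>i<length ks. 1 / real (ms ! i) ^ (ks ! i)) / real M ^ k"
proof -
  have "(\<Prod>i<length ks. 1 / real ((ms @ [M]) ! i) ^ ((ks @ [k]) ! i)) = (\<Prod>i<length ks. 1 / real (ms ! i) ^ (ks ! i))"
    using assms by (intro prod.cong refl) (auto simp: nth_append)
  with assms show ?thesis by (simp add: prod.lessThan_Suc nth_append)
qed

lemma mzvN_Nil [simp]: "mzvN M [] = 1"
  by (simp add: mzvN_def)

lemma incr_tuples_le_1: "M \<le> 1 \<Longrightarrow> incr_tuples M (Suc r) = {}"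
  unfolding incr_tuples_def by (auto simp: length_Suc_conv)

lemma mzvN_le_1: "M \<le> 1 \<Longrightarrow> mzvN M ks = (if ks = [] then 1 else 0)"
  by (cases ks) (simp_all add: mzvN_def incr_tuples_le_1)

lemma mzvN_Suc_snoc:
  assumes "M \<ge> 1"
  shows "mzvN (Suc M) (ks @ [k]) = mzvN M (ks @ [k]) + mzvN M ks / real M ^ k"
proof -
  have disj: "incr_tuples M (Suc (length ks)) \<inter> (\<lambda>ms. ms @ [M]) ` incr_tuples M (length ks) = {}"
    unfolding incr_tuples_def by auto
  have inj: "inj_on (\<lambda>ms. ms @ [M]) (incr_tuples M (length ks))" by (auto simp: inj_on_def)
  have "mzvN (Suc M) (ks @ [k]) = mzvN M (ks @ [k]) +
     (\<Sum>ms\<in>incr_tuples M (length ks). \<Prod>i<length (ks @ [k]). 1 / real ((ms @ [M]) ! i) ^ ((ks @ [k]) ! i))"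
    unfolding mzvN_def length_append_singleton incr_tuples_Suc_Suc[OF assms]
    by (simp add: sum.union_disjoint finite_incr_tuples disj sum.reindex[OF inj])
  also have "(\<Sum>ms\<in>incr_tuples M (length ks). \<Prod>i<length (ks @ [k]). 1 / real ((ms @ [M]) ! i) ^ ((ks @ [k]) ! i))
      = mzvN M ks / real M ^ k"
    unfolding mzvN_def sum_divide_distrib
    by (intro sum.cong refl prod_power_snoc) (simp add: incr_tuples_def)
  finally show ?thesis .
qed

lemma tzetaN_snoc:
  "tzetaN N (ks @ [k]) l = (\<Sum>M\<in>{1..<N}. mzvN M ks / real M ^ k * hsum N M l)"
proof -
  let ?r = "length ks"
  let ?f = "\<lambda>ms. (\<Prod>i<length (ks @ [k]). 1 / real (ms ! i) ^ ((ks @ [k]) ! i)) *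
        (\<Sum>ns\<in>weak_tuples (last ms) l. \<Prod>i<l. 1 / real (N - ns ! i))"
  have inj: "inj_on (\<lambda>ms. ms @ [M]) (incr_tuples M ?r)" for M by (auto simp: inj_on_def)
  have "tzetaN N (ks @ [k]) l = (\<Sum>ms\<in>(\<Union>M\<in>{1..<N}. (\<lambda>ms. ms @ [M]) ` incr_tuples M ?r). ?f ms)"
    unfolding tzetaN_def length_append_singleton incr_tuples_Suc_eq_UN by simp
  also have "\<dots> = (\<Sum>M\<in>{1..<N}. \<Sum>ms\<in>(\<lambda>ms. ms @ [M]) ` incr_tuples M ?r. ?f ms)"
    by (rule sum.UNION_disjoint) (auto simp: finite_incr_tuples)
  also have "\<dots> = (\<Sum>M\<in>{1..<N}. \<Sum>ms\<in>incr_tuples M ?r. ?f (ms @ [M]))"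
    by (simp add: sum.reindex[OF inj])
  also have "\<dots> = (\<Sum>M\<in>{1..<N}. \<Sum>ms\<in>incr_tuples M ?r. (\<Prod>i<?r. 1 / real (ms ! i) ^ (ks ! i)) / real M ^ k * hsum N M l)"
  proof (intro sum.cong refl)
    fix M ms assume "ms \<in> incr_tuples M ?r"
    then have "length ms = length ks" by (simp add: incr_tuples_def)
    then show "?f (ms @ [M]) = (\<Prod>i<?r. 1 / real (ms ! i) ^ (ks ! i)) / real M ^ k * hsum N M l"
      unfolding prod_power_snoc[OF \<open>length ms = length ks\<close>] by (simp add: hsum_def)
  qed
  also have "\<dots> = (\<Sum>M\<in>{1..<N}. mzvN M ks / real M ^ k * hsum N M l)"
    by (simp add: mzvN_def sum_divide_distrib sum_distrib_right)
  finally show ?thesis .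
qed


lemma snoc_mem_comps_iff:
  "ks @ [k] \<in> comps a b c \<longleftrightarrow>
     (k = 1 \<and> b \<ge> 1 \<and> ks \<in> comps a (b - 1) c) \<or>
     (k \<ge> 2 \<and> c \<ge> 1 \<and> k - 2 \<le> a \<and> ks \<in> comps (a - (k - 2)) b (c - 1))"
proof
  assume ks: "ks @ [k] \<in> comps a b c"
  then have pos: "\<forall>x\<in>set ks. 0 < x" and "k > 0" by (auto simp: comps_def)
  show "(k = 1 \<and> b \<ge> 1 \<and> ks \<in> comps a (b - 1) c) \<or>
     (k \<ge> 2 \<and> c \<ge> 1 \<and> k - 2 \<le> a \<and> ks \<in> comps (a - (k - 2)) b (c - 1))"
  proof (cases "k = 1")
    case False
    with \<open>k > 0\<close> ks n_ones_add_n_big_le_sum_list[OF pos] show ?thesis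
      by (auto simp: comps_def)
  qed (use ks in \<open>auto simp: comps_def\<close>)
qed (auto simp: comps_def)

lemma comps_eq:
  "comps a b c =
     (if a = 0 \<and> b = 0 \<and> c = 0 then {[]} else {}) \<union>
     (if b = 0 then {} else (\<lambda>ks. ks @ [1]) ` comps a (b - 1) c) \<union>
     (if c = 0 then {} else (\<Union>i\<le>a. (\<lambda>ks. ks @ [i + 2]) ` comps (a - i) b (c - 1)))"
  (is "_ = ?E \<union> ?S1 \<union> ?S2")
proof (intro equalityI subsetI)
  fix ks assume ks: "ks \<in> comps a b c"
  show "ks \<in> ?E \<union> ?S1 \<union> ?S2"
  proof (cases ks rule: rev_cases)
    case Nil
    with ks show ?thesis by (simp add: comps_def)
  next
    case (snoc ks' k)
    with ks snoc_mem_comps_iff[of ks' k a b c] show ?thesis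
      by (auto intro!: image_eqI[where x = ks'] bexI[where x = "k - 2"])
  qed
next
  fix ks assume "ks \<in> ?E \<union> ?S1 \<union> ?S2"
  then show "ks \<in> comps a b c"
    by (auto simp: snoc_mem_comps_iff split: if_splits) (simp add: comps_def)
qed

lemma sum_comps:
  "(\<Sum>ks\<in>comps a b c. f ks) =
     (if a = 0 \<and> b = 0 \<and> c = 0 then f [] else 0) +
     (if b = 0 then 0 else (\<Sum>ks\<in>comps a (b - 1) c. f (ks @ [1]))) +
     (if c = 0 then 0 else (\<Sum>i\<le>a. \<Sum>ks\<in>comps (a - i) b (c - 1). f (ks @ [i + 2])))"
proof -
  let ?E = "if a = 0 \<and> b = 0 \<and> c = 0 then {[]} else {}"
  let ?S1 = "if b = 0 then {} else (\<lambda>ks. ks @ [1]) ` comps a (b - 1) c"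
  let ?S2 = "if c = 0 then {} else (\<Union>i\<le>a. (\<lambda>ks. ks @ [i + 2]) ` comps (a - i) b (c - 1))"
  have inj: "inj_on (\<lambda>ks. ks @ [k]) A" for k :: nat and A by (auto simp: inj_on_def)
  have fin: "finite ?E" "finite ?S1" "finite ?S2" by (simp_all add: finite_comps)
  have "(\<Sum>ks\<in>(\<Union>i\<le>a. (\<lambda>ks. ks @ [i + 2]) ` comps (a - i) b (c - 1)). f ks)
      = (\<Sum>i\<le>a. \<Sum>ks\<in>comps (a - i) b (c - 1). f (ks @ [i + 2]))"
    by (subst sum.UNION_disjoint) (auto simp: finite_comps sum.reindex[OF inj])
  then have S2: "sum f ?S2 = (if c = 0 then 0 else (\<Sum>i\<le>a. \<Sum>ks\<in>comps (a - i) b (c - 1). f (ks @ [i + 2])))"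
    by simp
  have "?E \<inter> ?S1 = {}" "(?E \<union> ?S1) \<inter> ?S2 = {}" by auto
  with fin have "(\<Sum>ks\<in>comps a b c. f ks) = sum f ?E + sum f ?S1 + sum f ?S2"
    by (subst comps_eq) (simp add: sum.union_disjoint del: Un_iff)
  also have "sum f ?S1 = (if b = 0 then 0 else (\<Sum>ks\<in>comps a (b - 1) c. f (ks @ [1])))"
    by (simp add: sum.reindex[OF inj])
  finally show ?thesis by (simp add: S2)
qed

lemma comps_mzvN_le_1: "M \<le> 1 \<Longrightarrow> comps_mzvN M a b c = (if a = 0 \<and> b = 0 \<and> c = 0 then 1 else 0)"
  by (simp add: comps_mzvN_def mzvN_le_1 finite_comps) (simp add: comps_def)

lemma comps_mzvN_Suc:
  assumes "M \<ge> 1"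
  shows "comps_mzvN (Suc M) a b c = comps_mzvN M a b c
     + (if b = 0 then 0 else comps_mzvN M a (b - 1) c / real M)
     + (if c = 0 then 0 else (\<Sum>i\<le>a. comps_mzvN M (a - i) b (c - 1) / real M ^ (i + 2)))"
proof -
  have "comps_mzvN (Suc M) a b c - comps_mzvN M a b c = (\<Sum>ks\<in>comps a b c. mzvN (Suc M) ks - mzvN M ks)"
    by (simp add: comps_mzvN_def sum_subtractf)
  also have "\<dots> = (if b = 0 then 0 else comps_mzvN M a (b - 1) c / real M)
        + (if c = 0 then 0 else (\<Sum>i\<le>a. comps_mzvN M (a - i) b (c - 1) / real M ^ (i + 2)))"
    by (subst sum_comps) (simp add: mzvN_Suc_snoc[OF assms] comps_mzvN_def sum_divide_distrib)
  finally show ?thesis by (simp add: algebra_simps)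
qed

lemma mem_I0_bounds:
  assumes "(ks, l) \<in> I0 k q h"
  shows "1 \<le> h \<and> h \<le> q \<and> q + h \<le> k"
proof -
  have pos: "\<forall>x\<in>set ks. 0 < x" and "ks \<noteq> []" "last ks > 1"
    and sum: "sum_list ks + l = k" and len: "length ks + l = q" and big: "n_big ks = h"
    using assms by (auto simp: I0_def n_big_def)
  from \<open>ks \<noteq> []\<close> \<open>last ks > 1\<close> have "n_big ks \<ge> 1"
    unfolding n_big_def by (metis One_nat_def Suc_le_eq filter_empty_conv last_in_set length_greater_0_conv)
  with length_eq_n_ones_add_n_big[OF pos] n_ones_add_n_big_le_sum_list[OF pos] sum len big
  show ?thesis by linarith
qed

lemma mem_I0_iff:
  "(ks, l) \<in> I0 (a + b + 2 * c + 2) (b + c + 1) (c + 1) \<longleftrightarrow>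
     l \<le> b \<and> ks \<noteq> [] \<and> last ks > 1 \<and> ks \<in> comps a (b - l) (c + 1)"
proof -
  have "length ks = n_ones ks + n_big ks" if "\<forall>x\<in>set ks. 0 < x"
    using that by (rule length_eq_n_ones_add_n_big)
  then show ?thesis
    unfolding I0_def comps_def n_big_def[symmetric] by auto
qed

lemma I0_eq_image:
  "I0 (a + b + 2 * c + 2) (b + c + 1) (c + 1) =
     (\<lambda>(l, i, ks). (ks @ [i + 2], l)) ` (SIGMA l:{..b}. SIGMA i:{..a}. comps (a - i) (b - l) c)"
proof (intro equalityI subsetI)
  fix p assume "p \<in> I0 (a + b + 2 * c + 2) (b + c + 1) (c + 1)"
  then obtain ks0 l where p: "p = (ks0, l)" and "l \<le> b" "ks0 \<noteq> []" "last ks0 > 1"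
    and ks0: "ks0 \<in> comps a (b - l) (c + 1)"
    by (metis mem_I0_iff prod.exhaust)
  then obtain ks k where ks0_eq: "ks0 = ks @ [k]" and "k > 1" by (metis last_snoc rev_exhaust)
  with ks0 have "k - 2 \<le> a" "ks \<in> comps (a - (k - 2)) (b - l) c"
    by (auto simp: snoc_mem_comps_iff)
  with \<open>l \<le> b\<close> \<open>k > 1\<close> show "p \<in> (\<lambda>(l, i, ks). (ks @ [i + 2], l)) ` (SIGMA l:{..b}. SIGMA i:{..a}. comps (a - i) (b - l) c)"
    unfolding p ks0_eq by (intro image_eqI[where x = "(l, k - 2, ks)"]) auto
next
  fix p assume "p \<in> (\<lambda>(l, i, ks). (ks @ [i + 2], l)) ` (SIGMA l:{..b}. SIGMA i:{..a}. comps (a - i) (b - l) c)"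
  then obtain l i ks where p: "p = (ks @ [i + 2], l)"
    and "l \<le> b" "i \<le> a" "ks \<in> comps (a - i) (b - l) c"
    by auto
  then have "ks @ [i + 2] \<in> comps a (b - l) (c + 1)"
    by (simp add: snoc_mem_comps_iff)
  with \<open>l \<le> b\<close> show "p \<in> I0 (a + b + 2 * c + 2) (b + c + 1) (c + 1)"
    unfolding p mem_I0_iff by simp
qed

lemma S0_eq_sum_comps_mzvN:
  "S0 N (a + b + 2 * c + 2) (b + c + 1) (c + 1) =
    (\<Sum>M\<in>{1..<N}. \<Sum>i\<le>a. \<Sum>l\<le>b. comps_mzvN M (a - i) (b - l) c / real M ^ (i + 2) * hsum N M l)"
proof -
  have inj: "inj_on (\<lambda>(l, i, ks). (ks @ [i + 2::nat], l)) (SIGMA l:{..b}. SIGMA i:{..a}. comps (a - i) (b - l) c)"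
    by (auto simp: inj_on_def)
  have "S0 N (a + b + 2 * c + 2) (b + c + 1) (c + 1) =
      (\<Sum>(l, i, ks)\<in>(SIGMA l:{..b}. SIGMA i:{..a}. comps (a - i) (b - l) c). tzetaN N (ks @ [i + 2]) l)"
    unfolding S0_def I0_eq_image by (subst sum.reindex[OF inj]) (simp add: case_prod_beta)
  also have "\<dots> = (\<Sum>l\<le>b. \<Sum>i\<le>a. \<Sum>ks\<in>comps (a - i) (b - l) c. tzetaN N (ks @ [i + 2]) l)"
    by (simp add: sum.Sigma finite_comps split_def)
  also have "\<dots> = (\<Sum>l\<le>b. \<Sum>i\<le>a. \<Sum>M\<in>{1..<N}. comps_mzvN M (a - i) (b - l) c / real M ^ (i + 2) * hsum N M l)"
    unfolding tzetaN_snoc comps_mzvN_def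
    by (subst sum.swap) (simp add: sum_divide_distrib sum_distrib_right)
  also have "\<dots> = (\<Sum>M\<in>{1..<N}. \<Sum>i\<le>a. \<Sum>l\<le>b. comps_mzvN M (a - i) (b - l) c / real M ^ (i + 2) * hsum N M l)"
    by (subst sum.swap, subst (2) sum.swap, subst sum.swap) (rule refl)
  finally show ?thesis .
qed


section \<open>The generating series\<close>

text \<open>\<open>geom_x m\<close> and \<open>geom_y m\<close> are the expansions of \<open>1 / (m - X)\<close> and \<open>1 / (m - Y)\<close>.
  Thus \<open>A_fps m = 1 + Y / m + Z / (m (m - X))\<close>, \<open>B_fps n = 1 + (Z - X Y) / ((n - X) (n - Y))\<close>
  and \<open>H_prod N M = \<Prod>\<^bsub>n=1..M\<^esub> (N - n) / (N - n - Y)\<close>.\<close>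

definition geom_x :: "nat \<Rightarrow> real fps3" where
  "geom_x m = x_series (\<lambda>a. 1 / real m ^ (a + 1))"

definition geom_y :: "nat \<Rightarrow> real fps3" where
  "geom_y m = y_series (\<lambda>b. 1 / real m ^ (b + 1))"

definition A_fps :: "nat \<Rightarrow> real fps3" where
  "A_fps m = 1 + const3 (1 / real m) * Y3 + const3 (1 / real m) * (Z3 * geom_x m)"

definition B_fps :: "nat \<Rightarrow> real fps3" where
  "B_fps n = 1 + (Z3 - X3 * Y3) * (geom_x n * geom_y n)"

definition A_prod :: "nat \<Rightarrow> real fps3" where
  "A_prod M = (\<Prod>m\<in>{1..<M}. A_fps m)"

definition H_prod :: "nat \<Rightarrow> nat \<Rightarrow> real fps3" where
  "H_prod N M = (\<Prod>n\<in>{1..M}. const3 (real (N - n)) * geom_y (N - n))"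

definition B_prod :: "nat \<Rightarrow> real fps3" where
  "B_prod N = (\<Prod>n\<in>{1..<N}. B_fps n)"

definition gen :: "nat \<Rightarrow> real fps3" where
  "gen N = (\<Sum>M\<in>{1..<N}. const3 (1 / real M) * geom_x M * (H_prod N M * A_prod M))"

lemma coeff3_x_series: "coeff3 (x_series u) a b c = (if b = 0 \<and> c = 0 then u a else 0)"
  and coeff3_y_series: "coeff3 (y_series u) a b c = (if a = 0 \<and> c = 0 then u b else 0)"
  by (simp_all add: coeff3_def x_series_def y_series_def)

lemma const3_mult_x_series: "const3 r * x_series u = x_series (\<lambda>a. r * u a :: 'a::comm_semiring_1)"
  and const3_mult_y_series: "const3 r * y_series u = y_series (\<lambda>b. r * u b :: 'a::comm_semiring_1)"
  by (auto intro!: fps3_ext simp: coeff3_x_series coeff3_y_series)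

lemma y_series_mult: "y_series u * y_series v = y_series (\<lambda>b. \<Sum>j\<le>b. u j * v (b - j) :: 'a::comm_semiring_1)"
  by (rule fps3_ext) (simp add: coeff3_y_series_mult coeff3_y_series if_distrib cong: if_cong)

lemma y_series_1: "y_series (\<lambda>b. if b = 0 then 1 else 0) = (1 :: 'a::comm_semiring_1 fps3)"
  by (rule fps3_ext) (simp add: coeff3_y_series coeff3_1)

lemma geom_x_inverse: "m \<ge> 1 \<Longrightarrow> (of_nat m - X3) * geom_x m = 1"
proof (rule fps3_ext)
  fix a b c assume "m \<ge> 1"
  have "coeff3 ((of_nat m - X3) * geom_x m) a b c = real m * coeff3 (geom_x m) a b c - coeff3 (X3 * geom_x m) a b c"
    by (simp add: left_diff_distrib fps_of_nat[symmetric])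
  also have "\<dots> = coeff3 1 a b c"
    using \<open>m \<ge> 1\<close> by (cases a) (auto simp: coeff3_X3_mult geom_x_def coeff3_x_series coeff3_1)
  finally show "coeff3 ((of_nat m - X3) * geom_x m) a b c = coeff3 1 a b c" .
qed

lemma geom_y_inverse: "m \<ge> 1 \<Longrightarrow> (of_nat m - Y3) * geom_y m = 1"
proof (rule fps3_ext)
  fix a b c assume "m \<ge> 1"
  have "coeff3 ((of_nat m - Y3) * geom_y m) a b c = real m * coeff3 (geom_y m) a b c - coeff3 (Y3 * geom_y m) a b c"
    by (simp add: left_diff_distrib fps_of_nat[symmetric] del: fps_const_sub)
  also have "\<dots> = coeff3 1 a b c"
    using \<open>m \<ge> 1\<close> by (cases b) (auto simp: coeff3_Y3_mult geom_y_def coeff3_y_series coeff3_1)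
  finally show "coeff3 ((of_nat m - Y3) * geom_y m) a b c = coeff3 1 a b c" .
qed

lemma H_prod_eq_y_series: "M < N \<Longrightarrow> H_prod N M = y_series (hsum N M)"
proof (induction M)
  case 0
  then show ?case by (simp add: H_prod_def hsum_0 y_series_1)
next
  case (Suc M)
  define j where "j = N - Suc M"
  from Suc.prems have "j \<ge> 1" by (simp add: j_def)
  have "H_prod N (Suc M) = (const3 (real j) * geom_y j) * H_prod N M"
    by (simp add: H_prod_def prod.cl_ivl_Suc j_def mult.commute)
  also have "\<dots> = y_series (\<lambda>b. real j / real j ^ (b + 1)) * y_series (hsum N M)"
    using Suc by (simp add: geom_y_def const3_mult_y_series)
  also have "\<dots> = y_series (hsum N (Suc M))"
  proof -
    have "(\<Sum>i\<le>b. real j / real j ^ (i + 1) * hsum N M (b - i)) = hsum N (Suc M) b" for b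
      using \<open>j \<ge> 1\<close> by (simp add: hsum_Suc j_def[symmetric] field_simps)
    then show ?thesis by (simp add: y_series_mult)
  qed
  finally show ?case .
qed

lemma coeff3_A_fps_mult:
  "coeff3 (A_fps M * f) a b c = coeff3 f a b c
     + (if b = 0 then 0 else coeff3 f a (b - 1) c / real M)
     + (if c = 0 then 0 else (\<Sum>i\<le>a. coeff3 f (a - i) b (c - 1) / real M ^ (i + 2)))"
proof -
  have "A_fps M * f = f + const3 (1 / real M) * (Y3 * f) + Z3 * (const3 (1 / real M) * geom_x M * f)"
    by (simp add: A_fps_def algebra_simps)
  then show ?thesis
    by (simp add: coeff3_Y3_mult coeff3_Z3_mult geom_x_def const3_mult_x_series coeff3_x_series_mult)
qed

lemma coeff3_A_prod: "coeff3 (A_prod M) a b c = comps_mzvN M a b c"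
proof (induction M arbitrary: a b c)
  case (Suc M)
  show ?case
  proof (cases "M = 0")
    case False
    then have "A_prod (Suc M) = A_fps M * A_prod M"
      by (simp add: A_prod_def prod.atLeastLessThan_Suc mult.commute)
    with False show ?thesis
      by (simp add: coeff3_A_fps_mult Suc.IH comps_mzvN_Suc)
  qed (simp add: A_prod_def comps_mzvN_le_1 coeff3_1)
qed (simp add: A_prod_def comps_mzvN_le_1 coeff3_1)

lemma coeff3_gen: "coeff3 (gen N) a b c = S0 N (a + b + 2 * c + 2) (b + c + 1) (c + 1)"
proof -
  have "coeff3 (gen N) a b c =
      (\<Sum>M\<in>{1..<N}. coeff3 (x_series (\<lambda>i. 1 / real M ^ (i + 2)) * (y_series (hsum N M) * A_prod M)) a b c)"
    unfolding gen_def coeff3_sum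
    by (intro sum.cong refl) (simp add: H_prod_eq_y_series geom_x_def const3_mult_x_series mult.assoc)
  also have "\<dots> = (\<Sum>M\<in>{1..<N}. \<Sum>i\<le>a. \<Sum>l\<le>b. comps_mzvN M (a - i) (b - l) c / real M ^ (i + 2) * hsum N M l)"
    unfolding coeff3_x_series_mult coeff3_y_series_mult coeff3_A_prod by (simp add: sum_distrib_left mult_ac)
  also have "\<dots> = S0 N (a + b + 2 * c + 2) (b + c + 1) (c + 1)"
    by (rule S0_eq_sum_comps_mzvN[symmetric])
  finally show ?thesis .
qed

section \<open>The product formula for the generating series\<close>

definition to_fract :: "'a::idom \<Rightarrow> 'a fract" where
  "to_fract f = Fract f 1"

lemma to_fract_add: "to_fract (f + g) = to_fract f + to_fract g"
  and to_fract_mult: "to_fract (f * g) = to_fract f * to_fract g"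
  and to_fract_diff: "to_fract (f - g) = to_fract f - to_fract g"
  and to_fract_0: "to_fract 0 = 0"
  and to_fract_1: "to_fract 1 = 1"
  and to_fract_of_nat: "to_fract (of_nat n) = of_nat n"
  and to_fract_eq_iff: "to_fract f = to_fract g \<longleftrightarrow> f = g"
  by (simp_all add: to_fract_def Zero_fract_def One_fract_def Fract_of_nat_eq eq_fract)

lemma to_fract_sum: "to_fract (sum f S) = (\<Sum>s\<in>S. to_fract (f s))"
  by (induction S rule: infinite_finite_induct) (auto simp: to_fract_0 to_fract_add)

lemma to_fract_prod: "to_fract (prod f S) = (\<Prod>s\<in>S. to_fract (f s))"
  by (induction S rule: infinite_finite_induct) (auto simp: to_fract_1 to_fract_mult)

lemma to_fract_eq_inverse: "u * v = 1 \<Longrightarrow> to_fract v = 1 / to_fract u"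
  by (metis to_fract_1 to_fract_mult mult.commute nonzero_eq_divide_eq one_neq_zero mult_zero_left)

lemma of_nat_ne_to_fract:
  assumes "m \<ge> 1" and "coeff3 f 0 0 0 = 0"
  shows "of_nat m \<noteq> to_fract (f :: real fps3)"
proof
  assume "of_nat m = to_fract f"
  then have "of_nat m = f" by (simp flip: to_fract_of_nat add: to_fract_eq_iff)
  then have "coeff3 (of_nat m) 0 0 0 = coeff3 f 0 0 0" by simp
  with assms show False by (simp add: coeff3_of_nat)
qed

lemma to_fract_geom_x: "m \<ge> 1 \<Longrightarrow> to_fract (geom_x m) = 1 / (of_nat m - to_fract X3)"
  and to_fract_geom_y: "m \<ge> 1 \<Longrightarrow> to_fract (geom_y m) = 1 / (of_nat m - to_fract Y3)"
  using to_fract_eq_inverse[OF geom_x_inverse] to_fract_eq_inverse[OF geom_y_inverse]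
  by (simp_all add: to_fract_diff to_fract_of_nat)

lemma to_fract_const3_of_nat: "to_fract (const3 (real m)) = of_nat m"
  by (simp add: fps_of_nat to_fract_of_nat)

lemma to_fract_const3_inverse: "m \<ge> 1 \<Longrightarrow> to_fract (const3 (1 / real m)) = 1 / of_nat m"
  using to_fract_eq_inverse[of "of_nat m" "const3 (1 / real m)"]
  by (simp add: fps_of_nat[symmetric] to_fract_const3_of_nat)

lemma of_nat_ne_to_fract_X3_Y3_0:
  assumes "m \<ge> 1"
  shows "of_nat m \<noteq> to_fract (X3 :: real fps3)" "of_nat m \<noteq> to_fract (Y3 :: real fps3)"
    and "(of_nat m :: real fps3 fract) \<noteq> 0"
  using of_nat_ne_to_fract[OF assms, of X3] of_nat_ne_to_fract[OF assms, of Y3]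
    of_nat_ne_to_fract[OF assms, of 0]
  by (simp_all add: coeff3_def to_fract_0)

lemma to_fract_A_prod:
  "to_fract (A_prod M) = (\<Prod>m\<in>{1..<M}. saal_A (to_fract X3) (to_fract Y3) (to_fract Z3) m)"
  unfolding A_prod_def to_fract_prod
proof (intro prod.cong refl)
  fix m assume "m \<in> {1..<M}"
  then have "m \<ge> 1" by simp
  then show "to_fract (A_fps m) = saal_A (to_fract X3) (to_fract Y3) (to_fract Z3) m"
    unfolding A_fps_def to_fract_add to_fract_mult to_fract_1 to_fract_geom_x[OF \<open>m \<ge> 1\<close>]
      to_fract_const3_inverse[OF \<open>m \<ge> 1\<close>] saal_A_def
    by simp
qed

lemma to_fract_B_prod:
  "to_fract (B_prod N) = (\<Prod>n\<in>{1..<N}. saal_B (to_fract X3) (to_fract Y3) (to_fract Z3) n)"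
  unfolding B_prod_def to_fract_prod
proof (intro prod.cong refl)
  fix n assume "n \<in> {1..<N}"
  then have "n \<ge> 1" by simp
  then show "to_fract (B_fps n) = saal_B (to_fract X3) (to_fract Y3) (to_fract Z3) n"
    unfolding B_fps_def to_fract_add to_fract_mult to_fract_diff to_fract_1 to_fract_geom_x[OF \<open>n \<ge> 1\<close>]
      to_fract_geom_y[OF \<open>n \<ge> 1\<close>] saal_B_def
    by simp
qed

lemma to_fract_H_prod:
  assumes "M < N"
  shows "to_fract (H_prod N M) = saal_W (to_fract Y3) N M"
  unfolding H_prod_def to_fract_prod saal_W_def
proof (intro prod.cong refl)
  fix n assume "n \<in> {1..M}"
  with assms have "N - n \<ge> 1" by auto
  then show "to_fract (const3 (real (N - n)) * geom_y (N - n)) = of_nat (N - n) / (of_nat (N - n) - to_fract Y3)"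
    by (simp only: to_fract_mult to_fract_const3_of_nat to_fract_geom_y) simp
qed

lemma one_plus_gen_eq_B_prod: "1 + (Z3 - X3 * Y3) * gen N = B_prod N"
proof -
  let ?x = "to_fract (X3 :: real fps3)" and ?y = "to_fract (Y3 :: real fps3)" and ?z = "to_fract (Z3 :: real fps3)"
  have "to_fract (gen N) = (\<Sum>M\<in>{1..<N}. 1 / (of_nat M * (of_nat M - ?x)) * (\<Prod>m\<in>{1..<M}. saal_A ?x ?y ?z m) * saal_W ?y N M)"
    unfolding gen_def to_fract_sum
    by (intro sum.cong refl) (simp add: to_fract_mult to_fract_const3_inverse to_fract_geom_x to_fract_A_prod to_fract_H_prod)
  then have "to_fract (1 + (Z3 - X3 * Y3) * gen N) = to_fract (B_prod N)"
    using saal_product_identity[OF of_nat_ne_to_fract_X3_Y3_0, where N = N]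
    by (simp add: to_fract_add to_fract_mult to_fract_diff to_fract_1 to_fract_B_prod)
  then show ?thesis by (simp add: to_fract_eq_iff)
qed


section \<open>Polynomials in the truncated zeta values\<close>

definition zeta_poly :: "nat \<Rightarrow> (nat \<Rightarrow> real) \<Rightarrow> bool" where
  "zeta_poly w f \<longleftrightarrow> (\<exists>c. \<forall>N>0. f N = eval_whpoly w c (\<lambda>j. zetaN N j))"

definition eval_wmonomial :: "nat \<Rightarrow> (nat \<Rightarrow> nat) \<Rightarrow> (nat \<Rightarrow> real) \<Rightarrow> real" where
  "eval_wmonomial k e Z = (\<Prod>j\<in>{2..k}. Z j ^ e j)"

lemma eval_whpoly_eq: "eval_whpoly k c Z = (\<Sum>e\<in>wmonomials k. of_rat (c e) * eval_wmonomial k e Z)"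
  by (simp add: eval_whpoly_def eval_wmonomial_def)

lemma wmonomials_support: "e \<in> wmonomials k \<Longrightarrow> e j \<noteq> 0 \<Longrightarrow> 2 \<le> j \<and> j \<le> k"
  by (simp add: wmonomials_def)

lemma wmonomials_weight:
  assumes "e \<in> wmonomials k" "k \<le> K"
  shows "(\<Sum>j\<in>{2..K}. j * e j) = k"
proof -
  have "\<forall>i\<in>{2..K} - {2..k}. e i = 0"
    using wmonomials_support[OF assms(1)] by force
  with assms(2) have "(\<Sum>j\<in>{2..K}. j * e j) = (\<Sum>j\<in>{2..k}. j * e j)"
    by (intro sum.mono_neutral_right) auto
  with assms(1) show ?thesis by (simp add: wmonomials_def)
qed

lemma eval_wmonomial_extend:
  assumes "e \<in> wmonomials k" "k \<le> K"
  shows "(\<Prod>j\<in>{2..K}. Z j ^ e j) = eval_wmonomial k e Z"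
proof -
  have "\<forall>i\<in>{2..K} - {2..k}. e i = 0"
    using wmonomials_support[OF assms(1)] by force
  with assms(2) show ?thesis
    unfolding eval_wmonomial_def by (intro prod.mono_neutral_right) auto
qed

lemma finite_wmonomials: "finite (wmonomials k)"
proof -
  have "wmonomials k \<subseteq> {e. \<forall>j. (j \<in> {2..k} \<longrightarrow> e j \<in> {0..k}) \<and> (j \<notin> {2..k} \<longrightarrow> e j = 0)}"
  proof (intro subsetI CollectI allI conjI impI)
    fix e j assume e: "e \<in> wmonomials k"
    show "e j \<in> {0..k}" if j: "j \<in> {2..k}"
    proof -
      have "j * e j \<le> (\<Sum>i\<in>{2..k}. i * e i)" by (rule member_le_sum) (use j in auto)
      then have "j * e j \<le> k" using wmonomials_weight[OF e order.refl] by simp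
      moreover have "e j \<le> j * e j" using j by simp
      ultimately show ?thesis by (simp add: order_trans[of "e j" "j * e j" k])
    qed
    show "e j = 0" if "j \<notin> {2..k}"
      using that wmonomials_support[OF e, of j] by auto
  qed
  then show ?thesis
    using finite_set_of_finite_funs[of "{2..k}" "{0..k}" 0] finite_subset by blast
qed

lemma wmonomials_0: "wmonomials 0 = {\<lambda>_. 0}"
proof (intro equalityI subsetI)
  fix e assume e: "e \<in> wmonomials 0"
  have "e j = 0" for j
    using wmonomials_support[OF e, of j] by (cases "e j = 0") auto
  then show "e \<in> {\<lambda>_. 0}" by auto
qed (auto simp: wmonomials_def)

lemma add_mem_wmonomials:
  assumes "e1 \<in> wmonomials a" "e2 \<in> wmonomials b"
  shows "(\<lambda>j. e1 j + e2 j) \<in> wmonomials (a + b)"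
proof -
  have "\<forall>j. e1 j + e2 j \<noteq> 0 \<longrightarrow> 2 \<le> j \<and> j \<le> a + b"
    using wmonomials_support[OF assms(1)] wmonomials_support[OF assms(2)] by fastforce
  moreover have "(\<Sum>j\<in>{2..a + b}. j * (e1 j + e2 j)) = a + b"
    using wmonomials_weight[OF assms(1), of "a + b"] wmonomials_weight[OF assms(2), of "a + b"]
    by (simp add: distrib_left sum.distrib)
  ultimately show ?thesis by (simp add: wmonomials_def)
qed

lemma eval_wmonomial_add:
  assumes "e1 \<in> wmonomials a" "e2 \<in> wmonomials b"
  shows "eval_wmonomial (a + b) (\<lambda>j. e1 j + e2 j) Z = eval_wmonomial a e1 Z * eval_wmonomial b e2 Z"
  using eval_wmonomial_extend[OF assms(1), of "a + b"] eval_wmonomial_extend[OF assms(2), of "a + b"]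
  by (simp add: eval_wmonomial_def power_add prod.distrib)

lemma eval_whpoly_mult:
  "eval_whpoly a c1 Z * eval_whpoly b c2 Z =
   eval_whpoly (a + b) (\<lambda>e. \<Sum>p\<in>{p\<in>wmonomials a \<times> wmonomials b. (\<lambda>j. fst p j + snd p j) = e}. c1 (fst p) * c2 (snd p)) Z"
proof -
  let ?P = "wmonomials a \<times> wmonomials b"
  let ?g = "\<lambda>p j. fst p j + snd p j"
  let ?h = "\<lambda>p. of_rat (c1 (fst p) * c2 (snd p)) * eval_wmonomial (a + b) (?g p) Z"
  have "?g ` ?P \<subseteq> wmonomials (a + b)" using add_mem_wmonomials by auto
  then have "eval_whpoly (a + b) (\<lambda>e. \<Sum>p\<in>{p\<in>?P. ?g p = e}. c1 (fst p) * c2 (snd p)) Z = (\<Sum>p\<in>?P. ?h p)"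
    unfolding eval_whpoly_eq of_rat_sum sum_distrib_right
    by (subst sum.group[symmetric, OF _ finite_wmonomials]) (auto simp: finite_wmonomials intro!: sum.cong)
  also have "\<dots> = (\<Sum>p\<in>?P. (of_rat (c1 (fst p)) * eval_wmonomial a (fst p) Z) * (of_rat (c2 (snd p)) * eval_wmonomial b (snd p) Z))"
    by (intro sum.cong refl) (auto simp: eval_wmonomial_add of_rat_mult)
  also have "\<dots> = eval_whpoly a c1 Z * eval_whpoly b c2 Z"
    unfolding eval_whpoly_eq sum_product sum.cartesian_product by (simp add: case_prod_beta)
  finally show ?thesis by simp
qed

lemma eval_whpoly_add: "eval_whpoly w c1 Z + eval_whpoly w c2 Z = eval_whpoly w (\<lambda>e. c1 e + c2 e) Z"
  by (simp add: eval_whpoly_def of_rat_add distrib_right sum.distrib)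

lemma eval_whpoly_scale: "of_rat r * eval_whpoly w c Z = eval_whpoly w (\<lambda>e. r * c e) Z"
  by (simp add: eval_whpoly_def of_rat_mult sum_distrib_left mult.assoc)

lemma zeta_poly_cong: "zeta_poly w f \<Longrightarrow> (\<And>N. N > 0 \<Longrightarrow> g N = f N) \<Longrightarrow> zeta_poly w g"
  unfolding zeta_poly_def by auto

lemma zeta_poly_0: "zeta_poly w (\<lambda>N. 0)"
  unfolding zeta_poly_def by (rule exI[of _ "\<lambda>_. 0"]) (simp add: eval_whpoly_def)

lemma zeta_poly_1: "zeta_poly 0 (\<lambda>N. 1)"
  unfolding zeta_poly_def eval_whpoly_def wmonomials_0 by (rule exI[of _ "\<lambda>_. 1"]) simp

lemma zeta_poly_add:
  assumes "zeta_poly w f" "zeta_poly w g"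
  shows "zeta_poly w (\<lambda>N. f N + g N)"
proof -
  from assms obtain c1 c2 where "\<forall>N>0. f N = eval_whpoly w c1 (\<lambda>j. zetaN N j)"
    and "\<forall>N>0. g N = eval_whpoly w c2 (\<lambda>j. zetaN N j)"
    unfolding zeta_poly_def by blast
  then show ?thesis unfolding zeta_poly_def by (auto simp: eval_whpoly_add)
qed

lemma zeta_poly_sum: "(\<And>s. s \<in> S \<Longrightarrow> zeta_poly w (f s)) \<Longrightarrow> zeta_poly w (\<lambda>N. \<Sum>s\<in>S. f s N)"
  by (induction S rule: infinite_finite_induct) (simp_all add: zeta_poly_0 zeta_poly_add)

lemma zeta_poly_mult:
  assumes "zeta_poly a f" "zeta_poly b g"
  shows "zeta_poly (a + b) (\<lambda>N. f N * g N)"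
proof -
  from assms obtain c1 c2 where "\<forall>N>0. f N = eval_whpoly a c1 (\<lambda>j. zetaN N j)"
    and "\<forall>N>0. g N = eval_whpoly b c2 (\<lambda>j. zetaN N j)"
    unfolding zeta_poly_def by blast
  then show ?thesis unfolding zeta_poly_def by (auto simp: eval_whpoly_mult)
qed

lemma zeta_poly_scale:
  assumes "r \<in> \<rat>" "zeta_poly w f"
  shows "zeta_poly w (\<lambda>N. r * f N)"
proof -
  from assms(1) obtain q where "r = of_rat q" by (auto elim: Rats_cases)
  moreover from assms(2) obtain c where "\<forall>N>0. f N = eval_whpoly w c (\<lambda>j. zetaN N j)"
    unfolding zeta_poly_def by blast
  ultimately show ?thesis unfolding zeta_poly_def by (auto simp: eval_whpoly_scale)
qed


lemma zeta_poly_zetaN: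
  assumes "2 \<le> j"
  shows "zeta_poly j (\<lambda>N. zetaN N j)"
proof -
  define d where "d i = (if i = j then 1 else 0 :: nat)" for i
  have "(\<Sum>i\<in>{2..j}. i * d i) = j"
    using assms by (simp add: d_def if_distrib[of "(*) _"] sum.delta cong: if_cong)
  with assms have d: "d \<in> wmonomials j" by (simp add: wmonomials_def d_def)
  have "eval_wmonomial j d Z = Z j" for Z
    using assms by (simp add: eval_wmonomial_def d_def if_distrib[of "(^) _"] prod.delta cong: if_cong)
  with d have "eval_whpoly j (\<lambda>e. if e = d then 1 else 0) Z = Z j" for Z
    by (simp add: eval_whpoly_eq if_distrib[of of_rat] if_distrib[of "\<lambda>r. r * _"] sum.delta finite_wmonomials cong: if_cong)
  then show ?thesis unfolding zeta_poly_def by metis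
qed


section \<open>The logarithmic derivative of the product\<close>

definition euler3 :: "'a::semiring_1 fps3 \<Rightarrow> 'a fps3" where
  "euler3 f = Abs_fps3 (\<lambda>a b c. of_nat (a + b + 2 * c) * coeff3 f a b c)"

definition scale3 :: "'a::semiring_1 \<Rightarrow> 'a fps3 \<Rightarrow> 'a fps3" where
  "scale3 t f = Abs_fps3 (\<lambda>a b c. t ^ (a + b + 2 * c) * coeff3 f a b c)"

definition swap3 :: "'a fps3 \<Rightarrow> 'a fps3" where
  "swap3 f = Abs_fps3 (\<lambda>a b c. coeff3 f b a c)"

lemma weight_split:
  fixes a b c i j k :: nat
  assumes "i \<le> a" "j \<le> b" "k \<le> c"
  shows "a + b + 2 * c = (i + j + 2 * k) + ((a - i) + (b - j) + 2 * (c - k))"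
  using assms by arith

lemma euler3_mult: "euler3 (f * g :: 'a::comm_semiring_1 fps3) = euler3 f * g + f * euler3 g"
proof (rule fps3_ext)
  fix a b c
  have "coeff3 (euler3 f * g + f * euler3 g) a b c =
      (\<Sum>i\<le>a. \<Sum>j\<le>b. \<Sum>k\<le>c. of_nat (a + b + 2 * c) * (coeff3 f i j k * coeff3 g (a - i) (b - j) (c - k)))"
    unfolding coeff3_add coeff3_mult euler3_def coeff3_Abs_fps3 sum.distrib[symmetric]
  proof (intro sum.cong refl)
    fix i j k assume "i \<in> {..a}" "j \<in> {..b}" "k \<in> {..c}"
    then have "(of_nat (a + b + 2 * c) :: 'a) = of_nat (i + j + 2 * k) + of_nat ((a - i) + (b - j) + 2 * (c - k))"
      by (metis atMost_iff of_nat_add weight_split)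
    then show "of_nat (i + j + 2 * k) * coeff3 f i j k * coeff3 g (a - i) (b - j) (c - k)
        + coeff3 f i j k * (of_nat ((a - i) + (b - j) + 2 * (c - k)) * coeff3 g (a - i) (b - j) (c - k))
        = of_nat (a + b + 2 * c) * (coeff3 f i j k * coeff3 g (a - i) (b - j) (c - k))"
      unfolding \<open>of_nat (a + b + 2 * c) = _\<close> by (simp only: algebra_simps)
  qed
  then show "coeff3 (euler3 (f * g)) a b c = coeff3 (euler3 f * g + f * euler3 g) a b c"
    by (simp add: euler3_def coeff3_mult sum_distrib_left)
qed

lemma scale3_mult: "scale3 t (f * g :: 'a::comm_semiring_1 fps3) = scale3 t f * scale3 t g"
proof (rule fps3_ext)
  fix a b c
  have "coeff3 (scale3 t f * scale3 t g) a b c =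
      (\<Sum>i\<le>a. \<Sum>j\<le>b. \<Sum>k\<le>c. t ^ (a + b + 2 * c) * (coeff3 f i j k * coeff3 g (a - i) (b - j) (c - k)))"
    unfolding coeff3_mult scale3_def coeff3_Abs_fps3
  proof (intro sum.cong refl)
    fix i j k assume "i \<in> {..a}" "j \<in> {..b}" "k \<in> {..c}"
    then have "t ^ (a + b + 2 * c) = t ^ (i + j + 2 * k) * t ^ ((a - i) + (b - j) + 2 * (c - k))"
      by (metis atMost_iff power_add weight_split)
    then show "t ^ (i + j + 2 * k) * coeff3 f i j k * (t ^ ((a - i) + (b - j) + 2 * (c - k)) * coeff3 g (a - i) (b - j) (c - k))
        = t ^ (a + b + 2 * c) * (coeff3 f i j k * coeff3 g (a - i) (b - j) (c - k))"
      unfolding \<open>t ^ (a + b + 2 * c) = _\<close> by (simp only: mult_ac)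
  qed
  then show "coeff3 (scale3 t (f * g)) a b c = coeff3 (scale3 t f * scale3 t g) a b c"
    by (simp add: scale3_def coeff3_mult sum_distrib_left)
qed

lemma euler3_scale3: "euler3 (scale3 t f) = scale3 t (euler3 (f :: 'a::comm_semiring_1 fps3))"
  by (rule fps3_ext) (simp add: euler3_def scale3_def mult_ac)

lemma euler3_1: "euler3 (1 :: 'a::semiring_1 fps3) = 0"
  by (rule fps3_ext) (simp add: euler3_def coeff3_1)

lemma swap3_mult: "swap3 (f * g :: 'a::comm_semiring_1 fps3) = swap3 f * swap3 g"
proof (rule fps3_ext)
  fix a b c
  have "coeff3 (swap3 (f * g)) a b c = (\<Sum>i\<le>b. \<Sum>j\<le>a. \<Sum>k\<le>c. coeff3 f i j k * coeff3 g (b - i) (a - j) (c - k))"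
    by (simp add: swap3_def coeff3_mult)
  also have "\<dots> = (\<Sum>j\<le>a. \<Sum>i\<le>b. \<Sum>k\<le>c. coeff3 f i j k * coeff3 g (b - i) (a - j) (c - k))"
    by (rule sum.swap)
  finally show "coeff3 (swap3 (f * g)) a b c = coeff3 (swap3 f * swap3 g) a b c"
    by (simp add: swap3_def coeff3_mult)
qed

lemma swap3_prod: "swap3 (prod f S :: 'a::comm_semiring_1 fps3) = (\<Prod>s\<in>S. swap3 (f s))"
proof -
  have "swap3 (1 :: 'a fps3) = 1" by (rule fps3_ext) (simp add: swap3_def coeff3_1)
  then show ?thesis by (induction S rule: infinite_finite_induct) (auto simp: swap3_mult)
qed

lemma coeff3_B_fps:
  "coeff3 (B_fps n) a b c =
     (if a = 0 \<and> b = 0 \<and> c = 0 then 1 else 0)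
     + (if c = 1 then 1 / real n ^ (a + 1) * (1 / real n ^ (b + 1)) else 0)
     - (if a \<ge> 1 \<and> b \<ge> 1 \<and> c = 0 then 1 / real n ^ a * (1 / real n ^ b) else 0)"
proof -
  have G: "coeff3 (geom_x n * geom_y n) a b c = (if c = 0 then 1 / real n ^ (a + 1) * (1 / real n ^ (b + 1)) else 0)"
    for a b c
    by (simp add: geom_x_def geom_y_def coeff3_x_series_mult coeff3_y_series if_distrib[of "(*) _"] cong: if_cong)
  have "B_fps n = 1 + Z3 * (geom_x n * geom_y n) - X3 * (Y3 * (geom_x n * geom_y n))"
    by (simp add: B_fps_def algebra_simps)
  then show ?thesis
    by (cases a; cases b; cases c) (simp_all add: coeff3_1 coeff3_X3_mult coeff3_Y3_mult coeff3_Z3_mult G)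
qed

lemma swap3_B_prod: "swap3 (B_prod N) = B_prod N"
proof -
  have "swap3 (B_fps n) = B_fps n" for n
    by (rule fps3_ext) (simp add: swap3_def coeff3_B_fps conj_ac mult.commute)
  then show ?thesis by (simp add: B_prod_def swap3_prod)
qed

lemma scale3_B_fps_1: "scale3 (1 / real n) (B_fps 1) = B_fps n"
proof (rule fps3_ext)
  fix a b c
  have "(1 / real n) ^ (a + b + 2 * c) * coeff3 (B_fps 1) a b c = coeff3 (B_fps n) a b c"
  proof (cases "c = 0 \<or> c = 1")
    case True
    then show ?thesis
      by (auto simp: coeff3_B_fps power_one_over power_add[symmetric] mult_2 add_ac)
  qed (auto simp: coeff3_B_fps)
  then show "coeff3 (scale3 (1 / real n) (B_fps 1)) a b c = coeff3 (B_fps n) a b c"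
    by (simp add: scale3_def)
qed

lemma fps3_right_inverse_exists:
  fixes f :: "'a::field fps3"
  assumes "coeff3 f 0 0 0 \<noteq> 0"
  shows "\<exists>g. f * g = 1"
proof -
  let ?p = "f $ 0 $ 0"
  from assms have "?p * inverse ?p = 1" by (intro inverse_mult_eq_1') (simp add: coeff3_def)
  then have "f $ 0 * fps_right_inverse (f $ 0) (inverse ?p) = 1"
    by (rule fps_right_inverse)
  then have "f * fps_right_inverse f (fps_right_inverse (f $ 0) (inverse ?p)) = 1"
    by (rule fps_right_inverse)
  then show ?thesis by blast
qed

text \<open>The rescalings of \<open>dlog_B1\<close> are the logarithmic derivatives of all factors \<open>B_fps n\<close>
  (by \<open>scale3_B_fps_1\<close>); summed over \<open>n\<close> they produce the truncated zeta values.\<close>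
definition dlog_B1 :: "real fps3" where
  "dlog_B1 = euler3 (B_fps 1) * (SOME g. B_fps 1 * g = 1)"

lemma B_fps_1_mult_inverse: "B_fps 1 * (SOME g. B_fps 1 * g = 1) = 1"
  by (rule someI_ex, rule fps3_right_inverse_exists) (simp add: coeff3_B_fps)

lemma euler3_B_fps: "euler3 (B_fps n) = B_fps n * scale3 (1 / real n) dlog_B1"
proof -
  have "euler3 (B_fps 1) = euler3 (B_fps 1) * (B_fps 1 * (SOME g. B_fps 1 * g = 1))"
    by (simp only: B_fps_1_mult_inverse mult_1_right)
  also have "\<dots> = B_fps 1 * dlog_B1"
    unfolding dlog_B1_def by (simp only: ac_simps)
  finally have "euler3 (B_fps 1) = B_fps 1 * dlog_B1" .
  then have "euler3 (scale3 (1 / real n) (B_fps 1)) = scale3 (1 / real n) (B_fps 1 * dlog_B1)"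
    by (simp only: euler3_scale3)
  then show ?thesis by (simp only: scale3_mult scale3_B_fps_1)
qed

lemma euler3_B_prod: "euler3 (B_prod N) = B_prod N * (\<Sum>n\<in>{1..<N}. scale3 (1 / real n) dlog_B1)"
proof -
  have "euler3 (\<Prod>n\<in>S. B_fps n) = (\<Prod>n\<in>S. B_fps n) * (\<Sum>n\<in>S. scale3 (1 / real n) dlog_B1)" for S
    by (induction S rule: infinite_finite_induct) (simp_all add: euler3_1 euler3_mult euler3_B_fps algebra_simps)
  then show ?thesis by (simp add: B_prod_def)
qed

lemma coeff3_B_prod_recurrence:
  "real (a + b + 2 * c) * coeff3 (B_prod N) a b c =
   (\<Sum>i\<le>a. \<Sum>j\<le>b. \<Sum>k\<le>c. coeff3 (B_prod N) i j k *
       (coeff3 dlog_B1 (a - i) (b - j) (c - k) * zetaN N ((a - i) + (b - j) + 2 * (c - k))))"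
proof -
  have dlog: "coeff3 (\<Sum>n\<in>{1..<N}. scale3 (1 / real n) dlog_B1) p q r = coeff3 dlog_B1 p q r * zetaN N (p + q + 2 * r)"
    for p q r
    by (simp add: coeff3_sum scale3_def zetaN_def sum_distrib_left power_one_over mult.commute)
  have "real (a + b + 2 * c) * coeff3 (B_prod N) a b c = coeff3 (euler3 (B_prod N)) a b c"
    by (simp add: euler3_def)
  then show ?thesis
    by (simp only: euler3_B_prod coeff3_mult dlog)
qed

definition rat_coeffs :: "real fps3 \<Rightarrow> bool" where
  "rat_coeffs f \<longleftrightarrow> (\<forall>a b c. coeff3 f a b c \<in> \<rat>)"

lemma rat_coeffs_mult: "rat_coeffs f \<Longrightarrow> rat_coeffs g \<Longrightarrow> rat_coeffs (f * g)"
  unfolding rat_coeffs_def coeff3_mult by (intro allI Rats_sum Rats_mult) auto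

lemma rat_coeffs_euler3: "rat_coeffs f \<Longrightarrow> rat_coeffs (euler3 f)"
  unfolding rat_coeffs_def euler3_def by (auto intro!: Rats_mult)

lemma rat_coeffs_B_fps_1: "rat_coeffs (B_fps 1)"
  unfolding rat_coeffs_def coeff3_B_fps by auto

lemma sum_atMost3_extract_000:
  "(\<Sum>i\<le>(a::nat). \<Sum>j\<le>(b::nat). \<Sum>k\<le>(c::nat). F i j k) =
   F 0 0 0 + (\<Sum>i\<le>a. \<Sum>j\<le>b. \<Sum>k\<le>c. if i = 0 \<and> j = 0 \<and> k = 0 then 0 else (F i j k :: 'a::comm_monoid_add))"
proof -
  have delta: "(\<Sum>i\<le>a. \<Sum>j\<le>b. \<Sum>k\<le>c. if i = 0 \<and> j = 0 \<and> k = 0 then F i j k else 0) = F 0 0 0"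
  proof -
    have "(\<Sum>k\<le>c. if i = 0 \<and> j = 0 \<and> k = 0 then F i j k else 0) = (if i = 0 \<and> j = 0 then F i j 0 else 0)" for i j
      by (cases "i = 0 \<and> j = 0") (auto intro: sum.neutral simp: sum.delta)
    moreover have "(\<Sum>j\<le>b. if i = 0 \<and> j = 0 then F i j 0 else 0) = (if i = 0 then F i 0 0 else 0)" for i
      by (cases "i = 0") (auto intro: sum.neutral simp: sum.delta)
    ultimately show ?thesis by (simp add: sum.delta)
  qed
  have "(\<Sum>i\<le>a. \<Sum>j\<le>b. \<Sum>k\<le>c. F i j k) =
     (\<Sum>i\<le>a. \<Sum>j\<le>b. \<Sum>k\<le>c. (if i = 0 \<and> j = 0 \<and> k = 0 then F i j k else 0)
        + (if i = 0 \<and> j = 0 \<and> k = 0 then 0 else F i j k))"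
    by (intro sum.cong refl) auto
  then show ?thesis by (simp only: sum.distrib delta)
qed

lemma rat_coeffs_right_inverse:
  assumes "f * g = 1" "coeff3 f 0 0 0 = 1" "rat_coeffs f"
  shows "rat_coeffs g"
proof -
  have "coeff3 g a b c \<in> \<rat>" if "a + b + c = n" for n a b c
    using that
  proof (induction n arbitrary: a b c rule: less_induct)
    case (less n)
    have "coeff3 1 a b c = coeff3 (f * g) a b c"
      using assms(1) by simp
    also have "\<dots> = coeff3 g a b c +
       (\<Sum>i\<le>a. \<Sum>j\<le>b. \<Sum>k\<le>c. if i = 0 \<and> j = 0 \<and> k = 0 then 0 else coeff3 f i j k * coeff3 g (a - i) (b - j) (c - k))"
      unfolding coeff3_mult by (subst sum_atMost3_extract_000) (simp add: assms(2))
    finally have "coeff3 1 a b c = coeff3 g a b c +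
       (\<Sum>i\<le>a. \<Sum>j\<le>b. \<Sum>k\<le>c. if i = 0 \<and> j = 0 \<and> k = 0 then 0 else coeff3 f i j k * coeff3 g (a - i) (b - j) (c - k))" .
    then have "coeff3 g a b c = coeff3 1 a b c -
       (\<Sum>i\<le>a. \<Sum>j\<le>b. \<Sum>k\<le>c. if i = 0 \<and> j = 0 \<and> k = 0 then 0 else coeff3 f i j k * coeff3 g (a - i) (b - j) (c - k))"
      by (simp add: algebra_simps)
    also have "\<dots> \<in> \<rat>"
    proof (intro Rats_diff Rats_sum)
      fix i j k assume "i \<in> {..a}" "j \<in> {..b}" "k \<in> {..c}"
      with less.prems less.IH[of "(a - i) + (b - j) + (c - k)"] assms(3)
      show "(if i = 0 \<and> j = 0 \<and> k = 0 then 0 else coeff3 f i j k * coeff3 g (a - i) (b - j) (c - k)) \<in> \<rat>"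
        by (auto simp: rat_coeffs_def)
    qed (simp add: coeff3_1)
    finally show ?case .
  qed
  then show ?thesis unfolding rat_coeffs_def by blast
qed

lemma rat_coeffs_dlog_B1: "rat_coeffs dlog_B1"
  unfolding dlog_B1_def
  by (intro rat_coeffs_mult rat_coeffs_euler3 rat_coeffs_B_fps_1 rat_coeffs_right_inverse[OF B_fps_1_mult_inverse])
    (simp add: coeff3_B_fps)

lemma coeff3_dlog_B1_weight_le_1:
  assumes "a + b + 2 * c \<le> 1"
  shows "coeff3 dlog_B1 a b c = 0"
proof -
  have "coeff3 (euler3 (B_fps 1)) i j k = 0" if "i \<le> a" "j \<le> b" "k \<le> c" for i j k
  proof -
    from that assms have "i + j + 2 * k = 0 \<or> (k = 0 \<and> (i = 1 \<and> j = 0 \<or> i = 0 \<and> j = 1))" by auto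
    then show ?thesis by (auto simp: euler3_def coeff3_B_fps)
  qed
  then show ?thesis unfolding dlog_B1_def coeff3_mult by simp
qed


section \<open>Coefficients of the product and of the generating series\<close>

lemma coeff3_B_prod_000: "coeff3 (B_prod N) 0 0 0 = 1"
proof -
  have "coeff3 (prod f S) 0 0 0 = (\<Prod>s\<in>S. coeff3 (f s) 0 0 0)" for f :: "nat \<Rightarrow> real fps3" and S
    by (induction S rule: infinite_finite_induct) (auto simp: coeff3_1 coeff3_mult_000)
  then show ?thesis by (simp add: B_prod_def coeff3_B_fps)
qed

lemma zeta_poly_coeff3_B_prod: "zeta_poly (a + b + 2 * c) (\<lambda>N. coeff3 (B_prod N) a b c)"
proof (induction "a + b + 2 * c" arbitrary: a b c rule: less_induct)
  case less
  define w where "w = a + b + 2 * c"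
  define t where "t i j k N = coeff3 (B_prod N) i j k *
      (coeff3 dlog_B1 (a - i) (b - j) (c - k) * zetaN N ((a - i) + (b - j) + 2 * (c - k)))" for i j k N
  show ?case
  proof (cases "w = 0")
    case True
    then show ?thesis by (simp add: w_def coeff3_B_prod_000 zeta_poly_1)
  next
    case False
    have "zeta_poly w (t i j k)" if "i \<le> a" "j \<le> b" "k \<le> c" for i j k
    proof (cases "(a - i) + (b - j) + 2 * (c - k) \<le> 1")
      case True
      then have "t i j k = (\<lambda>N. 0)" by (simp add: fun_eq_iff t_def coeff3_dlog_B1_weight_le_1)
      then show ?thesis by (simp add: zeta_poly_0)
    next
      case False
      have "zeta_poly ((i + j + 2 * k) + ((a - i) + (b - j) + 2 * (c - k))) (t i j k)"
        unfolding t_def using False that rat_coeffs_dlog_B1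
        by (intro zeta_poly_mult less zeta_poly_scale zeta_poly_zetaN) (auto simp: rat_coeffs_def)
      with that show ?thesis by (simp add: w_def weight_split)
    qed
    then have "zeta_poly w (\<lambda>N. 1 / real w * (\<Sum>i\<le>a. \<Sum>j\<le>b. \<Sum>k\<le>c. t i j k N))"
      by (intro zeta_poly_scale zeta_poly_sum) auto
    moreover have "coeff3 (B_prod N) a b c = 1 / real w * (\<Sum>i\<le>a. \<Sum>j\<le>b. \<Sum>k\<le>c. t i j k N)" for N
    proof -
      have "real w * coeff3 (B_prod N) a b c = (\<Sum>i\<le>a. \<Sum>j\<le>b. \<Sum>k\<le>c. t i j k N)"
        unfolding w_def t_def by (rule coeff3_B_prod_recurrence)
      with False show ?thesis by (simp add: field_simps)
    qed
    ultimately show ?thesis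
      unfolding w_def[symmetric] by (rule zeta_poly_cong)
  qed
qed

lemma coeff3_gen_eq_sum_B_prod:
  "coeff3 (gen N) a b c = - (\<Sum>i\<le>c. coeff3 (B_prod N) (a + 1 + i) (b + 1 + i) (c - i))"
proof -
  have step: "coeff3 (B_prod N) (a + 1) (b + 1) c =
      (if c = 0 then 0 else coeff3 (gen N) (a + 1) (b + 1) (c - 1)) - coeff3 (gen N) a b c" for a b c
  proof -
    have "B_prod N = 1 + Z3 * gen N - X3 * (Y3 * gen N)"
      by (simp flip: one_plus_gen_eq_B_prod add: algebra_simps)
    then show ?thesis by (simp add: coeff3_1 coeff3_X3_mult coeff3_Y3_mult coeff3_Z3_mult)
  qed
  show ?thesis
  proof (induction c arbitrary: a b)
    case 0
    then show ?case using step[of a b 0] by simp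
  next
    case (Suc c)
    have "coeff3 (gen N) a b (Suc c) = coeff3 (gen N) (a + 1) (b + 1) c - coeff3 (B_prod N) (a + 1) (b + 1) (Suc c)"
      using step[of a b "Suc c"] by simp
    also have "\<dots> = - (\<Sum>i\<le>Suc c. coeff3 (B_prod N) (a + 1 + i) (b + 1 + i) (Suc c - i))"
      using Suc.IH[of "a + 1" "b + 1"] by (subst sum.atMost_Suc_shift) (simp add: add_ac)
    finally show ?case .
  qed
qed

lemma coeff3_gen_swap: "coeff3 (gen N) a b c = coeff3 (gen N) b a c"
proof -
  have "coeff3 (B_prod N) a b c = coeff3 (B_prod N) b a c" for a b c
    by (metis swap3_B_prod swap3_def coeff3_Abs_fps3)
  then show ?thesis by (simp only: coeff3_gen_eq_sum_B_prod)
qed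

lemma S0_eq_0:
  assumes "\<not> (1 \<le> h \<and> h \<le> q \<and> q + h \<le> k)"
  shows "S0 N k q h = 0"
proof -
  from assms have "I0 k q h = {}" using mem_I0_bounds by fast
  then show ?thesis by (simp add: S0_def)
qed

lemma S0_eq_coeff3_gen:
  assumes "1 \<le> h" "h \<le> q" "q + h \<le> k"
  shows "S0 N k q h = coeff3 (gen N) (k - q - h) (q - h) (h - 1)"
proof -
  from assms have "k = (k - q - h) + (q - h) + 2 * (h - 1) + 2" "q = (q - h) + (h - 1) + 1" "h = (h - 1) + 1"
    by auto
  then show ?thesis by (metis coeff3_gen)
qed

lemma zeta_poly_S0: "zeta_poly k (\<lambda>N. S0 N k q h)"
proof (cases "1 \<le> h \<and> h \<le> q \<and> q + h \<le> k")
  case True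
  define a b c where "a = k - q - h" and "b = q - h" and "c = h - 1"
  have "zeta_poly k (\<lambda>N. - 1 * (\<Sum>i\<le>c. coeff3 (B_prod N) (a + 1 + i) (b + 1 + i) (c - i)))"
  proof (intro zeta_poly_scale zeta_poly_sum)
    fix i assume "i \<in> {..c}"
    with True have "k = (a + 1 + i) + (b + 1 + i) + 2 * (c - i)" by (auto simp: a_def b_def c_def)
    then show "zeta_poly k (\<lambda>N. coeff3 (B_prod N) (a + 1 + i) (b + 1 + i) (c - i))"
      using zeta_poly_coeff3_B_prod[of "a + 1 + i" "b + 1 + i" "c - i"] by (simp only:)
  qed simp
  then show ?thesis
  proof (rule zeta_poly_cong)
    fix N :: nat
    from True have "S0 N k q h = coeff3 (gen N) a b c"
      unfolding a_def b_def c_def by (intro S0_eq_coeff3_gen) auto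
    then show "S0 N k q h = - 1 * (\<Sum>i\<le>c. coeff3 (B_prod N) (a + 1 + i) (b + 1 + i) (c - i))"
      by (simp add: coeff3_gen_eq_sum_B_prod)
  qed
qed (simp add: S0_eq_0 zeta_poly_0)

lemma S0_duality: "S0 N k q h = S0 N k (k - q) h"
proof (cases "1 \<le> h \<and> h \<le> q \<and> q + h \<le> k")
  case True
  then have "1 \<le> h" "h \<le> k - q" "(k - q) + h \<le> k" and "k - (k - q) = q" by auto
  then have "S0 N k (k - q) h = coeff3 (gen N) (q - h) (k - q - h) (h - 1)"
    using S0_eq_coeff3_gen[of h "k - q" k N] by simp
  also have "\<dots> = coeff3 (gen N) (k - q - h) (q - h) (h - 1)"
    by (rule coeff3_gen_swap)
  also have "\<dots> = S0 N k q h"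
    using True by (intro S0_eq_coeff3_gen[symmetric]) auto
  finally show ?thesis ..
next
  case False
  then have "\<not> (1 \<le> h \<and> h \<le> k - q \<and> (k - q) + h \<le> k)" by auto
  with False show ?thesis by (simp add: S0_eq_0)
qed

theorem corollary5p5:
  shows "(\<forall>k q h :: nat. k > 0 \<and> q > 0 \<and> h > 0 \<longrightarrow>
            (\<exists>c :: (nat \<Rightarrow> nat) \<Rightarrow> rat. \<forall>N :: nat. N > 0 \<longrightarrow>
               S0 N k q h = eval_whpoly k c (\<lambda>j. zetaN N j)))
       \<and> (\<forall>N k q h :: nat. N > 0 \<and> k > 0 \<and> q > 0 \<and> h > 0 \<longrightarrow>
               S0 N k q h = S0 N k (k - q) h)"
  using zeta_poly_S0 S0_duality unfolding zeta_poly_def by blast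

end
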